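(* Let $R$ be a right semihereditary ring such that $M_n(R)$ is a Baer ring for every $n\ge1$, let $M$ be a finitely generated right $R$-module and $K$ a submodule of $M$. (1) $M/\mathrm{cl}_{\mathbf B}(K)$ is finitely generated projective and $\mathrm{cl}_{\mathbf B}(K)$ is a direct summand of $M$. In particular $M=\mathbf B M\oplus \mathbf U M$, where $\mathbf BM$ is the bounded torsion submodule of $M$ and $\mathbf UM\cong M/\mathbf BM$ is finitely generated projective. (2) If moreover $R$ is right strongly semihereditary, then $\mathrm{cl}_{\mathbf T}(K)=\mathrm{cl}_{\mathbf B}(K)$ is a direct summand of $M$, and the torsion theories $(\mathbf B,\mathbf U)$ and $(\mathbf T,\mathbf P)$ coincide on the class of finitely generated modules. In particular every finitely generated right $R$-module is the direct sum of a finitely generated projective module and a singular module.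
   Context: $(\mathbf B,\mathbf U)$ is the torsion theory whose torsion class $\mathbf B$ consists of the right modules $M$ with $\mathrm{Hom}_R(M,R)=0$ (bounded modules); $\mathbf BM$ is the largest bounded submodule of $M$ and $\mathbf UM=M/\mathbf BM$. For a torsion theory with torsion class $\mathcal T$, $\mathrm{cl}_{\mathcal T}^M(K)=\pi^{-1}(\mathcal T(M/K))$ where $\pi:M\to M/K$. $(\mathbf T,\mathbf P)$ is the Goldie torsion theory (torsion-free class = nonsingular modules; for right nonsingular $R$ the torsion modules are the singular ones). A ring is Baer if every right annihilator is generated by an idempotent. $R$ is right strongly semihereditary if $R$ is right nonsingular and every finitely generated nonsingular right $R$-module is projective. *)

theory Defs
  imports "HOL-Algebra.Module" "HOL-Algebra.AbelCoset"
begin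

text \<open>Right modules over a (not necessarily commutative) ring R, encoded with the
  HOL-Algebra module record: the field smult M r x stands for the right action x r.\<close>

definition right_module :: "'a ring \<Rightarrow> ('a, 'm) module \<Rightarrow> bool" where
  "right_module R M \<longleftrightarrow> ring R \<and> abelian_group M \<and>
     (\<forall>r\<in>carrier R. \<forall>x\<in>carrier M. smult M r x \<in> carrier M) \<and>
     (\<forall>r\<in>carrier R. \<forall>s\<in>carrier R. \<forall>x\<in>carrier M.
        smult M (r \<oplus>\<^bsub>R\<^esub> s) x = smult M r x \<oplus>\<^bsub>M\<^esub> smult M s x) \<and>
     (\<forall>r\<in>carrier R. \<forall>x\<in>carrier M. \<forall>y\<in>carrier M.
        smult M r (x \<oplus>\<^bsub>M\<^esub> y) = smult M r x \<oplus>\<^bsub>M\<^esub> smult M r y) \<and>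
     (\<forall>r\<in>carrier R. \<forall>s\<in>carrier R. \<forall>x\<in>carrier M.
        smult M (r \<otimes>\<^bsub>R\<^esub> s) x = smult M s (smult M r x)) \<and>
     (\<forall>x\<in>carrier M. smult M \<one>\<^bsub>R\<^esub> x = x)"

definition submodule :: "'a ring \<Rightarrow> ('a, 'm) module \<Rightarrow> 'm set \<Rightarrow> bool" where
  "submodule R M K \<longleftrightarrow> K \<subseteq> carrier M \<and> \<zero>\<^bsub>M\<^esub> \<in> K \<and>
     (\<forall>x\<in>K. \<forall>y\<in>K. x \<oplus>\<^bsub>M\<^esub> y \<in> K) \<and> (\<forall>x\<in>K. \<ominus>\<^bsub>M\<^esub> x \<in> K) \<and>
     (\<forall>x\<in>K. \<forall>r\<in>carrier R. smult M r x \<in> K)"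

definition module_hom :: "'a ring \<Rightarrow> ('a, 'm) module \<Rightarrow> ('a, 'n) module \<Rightarrow> ('m \<Rightarrow> 'n) \<Rightarrow> bool" where
  "module_hom R M N f \<longleftrightarrow> (\<forall>x\<in>carrier M. f x \<in> carrier N) \<and>
     (\<forall>x\<in>carrier M. \<forall>y\<in>carrier M. f (x \<oplus>\<^bsub>M\<^esub> y) = f x \<oplus>\<^bsub>N\<^esub> f y) \<and>
     (\<forall>x\<in>carrier M. \<forall>r\<in>carrier R. f (smult M r x) = smult N r (f x))"

definition RR :: "'a ring \<Rightarrow> ('a, 'a) module" where
  "RR R = \<lparr>carrier = carrier R, mult = mult R, one = one R, zero = zero R, add = add R,
           smult = (\<lambda>r x. x \<otimes>\<^bsub>R\<^esub> r)\<rparr>"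

definition right_ideal :: "'a ring \<Rightarrow> 'a set \<Rightarrow> bool" where
  "right_ideal R I \<longleftrightarrow> submodule R (RR R) I"

definition quot_mod :: "'a ring \<Rightarrow> ('a, 'm) module \<Rightarrow> 'm set \<Rightarrow> ('a, 'm set) module" where
  "quot_mod R M K = \<lparr>carrier = {K +>\<^bsub>M\<^esub> x | x. x \<in> carrier M},
     mult = (\<lambda>A B. K), one = K, zero = K,
     add = (\<lambda>A B. A <+>\<^bsub>M\<^esub> B),
     smult = (\<lambda>r A. K +>\<^bsub>M\<^esub> smult M r (SOME a. a \<in> A))\<rparr>"

definition span :: "'a ring \<Rightarrow> ('a, 'm) module \<Rightarrow> 'm set \<Rightarrow> 'm set" where
  "span R M S = \<Inter>{K. submodule R M K \<and> S \<subseteq> K}"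

definition fin_gen :: "'a ring \<Rightarrow> ('a, 'm) module \<Rightarrow> bool" where
  "fin_gen R M \<longleftrightarrow> (\<exists>S. finite S \<and> S \<subseteq> carrier M \<and> span R M S = carrier M)"

definition direct_summand :: "'a ring \<Rightarrow> ('a, 'm) module \<Rightarrow> 'm set \<Rightarrow> bool" where
  "direct_summand R M K \<longleftrightarrow> submodule R M K \<and>
     (\<exists>L. submodule R M L \<and> K \<inter> L = {\<zero>\<^bsub>M\<^esub>} \<and>
          (\<forall>x\<in>carrier M. \<exists>k\<in>K. \<exists>l\<in>L. x = k \<oplus>\<^bsub>M\<^esub> l))"

definition free_mod :: "'a ring \<Rightarrow> 'i set \<Rightarrow> ('a, 'i \<Rightarrow> 'a) module" where
  "free_mod R I = \<lparr>carrier = {f. (\<forall>i\<in>I. f i \<in> carrier R) \<and> (\<forall>i. i \<notin> I \<longrightarrow> f i = \<zero>\<^bsub>R\<^esub>) \<and>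
                               finite {i. f i \<noteq> \<zero>\<^bsub>R\<^esub>}},
     mult = (\<lambda>f g i. \<zero>\<^bsub>R\<^esub>), one = (\<lambda>i. \<zero>\<^bsub>R\<^esub>), zero = (\<lambda>i. \<zero>\<^bsub>R\<^esub>),
     add = (\<lambda>f g i. f i \<oplus>\<^bsub>R\<^esub> g i),
     smult = (\<lambda>r f i. f i \<otimes>\<^bsub>R\<^esub> r)\<rparr>"

text \<open>Projective: isomorphic to a direct summand of a free module (the free module on
  the underlying set of M suffices).\<close>
definition projective :: "'a ring \<Rightarrow> ('a, 'm) module \<Rightarrow> bool" where
  "projective R M \<longleftrightarrow> (\<exists>f. module_hom R M (free_mod R (carrier M)) f \<and> inj_on f (carrier M) \<and>
      direct_summand R (free_mod R (carrier M)) (f ` carrier M))"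

definition bounded :: "'a ring \<Rightarrow> ('a, 'm) module \<Rightarrow> bool" where
  "bounded R M \<longleftrightarrow> (\<forall>f. module_hom R M (RR R) f \<longrightarrow> (\<forall>x\<in>carrier M. f x = \<zero>\<^bsub>R\<^esub>))"

definition torsB :: "'a ring \<Rightarrow> ('a, 'm) module \<Rightarrow> 'm set" where
  "torsB R M = \<Union>{K. submodule R M K \<and> bounded R (M\<lparr>carrier := K\<rparr>)}"

definition essential_right_ideal :: "'a ring \<Rightarrow> 'a set \<Rightarrow> bool" where
  "essential_right_ideal R I \<longleftrightarrow> right_ideal R I \<and>
     (\<forall>J. right_ideal R J \<and> J \<noteq> {\<zero>\<^bsub>R\<^esub>} \<longrightarrow> I \<inter> J \<noteq> {\<zero>\<^bsub>R\<^esub>})"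

definition singular_sub :: "'a ring \<Rightarrow> ('a, 'm) module \<Rightarrow> 'm set" where
  "singular_sub R M = {x \<in> carrier M.
      essential_right_ideal R {r \<in> carrier R. smult M r x = \<zero>\<^bsub>M\<^esub>}}"

definition singular :: "'a ring \<Rightarrow> ('a, 'm) module \<Rightarrow> bool" where
  "singular R M \<longleftrightarrow> singular_sub R M = carrier M"

definition nonsingular :: "'a ring \<Rightarrow> ('a, 'm) module \<Rightarrow> bool" where
  "nonsingular R M \<longleftrightarrow> singular_sub R M = {\<zero>\<^bsub>M\<^esub>}"

definition torsT :: "'a ring \<Rightarrow> ('a, 'm) module \<Rightarrow> 'm set" where
  "torsT R M = {x \<in> carrier M.
      singular_sub R M +>\<^bsub>M\<^esub> x \<in> singular_sub R (quot_mod R M (singular_sub R M))}"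

definition clB :: "'a ring \<Rightarrow> ('a, 'm) module \<Rightarrow> 'm set \<Rightarrow> 'm set" where
  "clB R M K = {x \<in> carrier M. K +>\<^bsub>M\<^esub> x \<in> torsB R (quot_mod R M K)}"

definition clT :: "'a ring \<Rightarrow> ('a, 'm) module \<Rightarrow> 'm set \<Rightarrow> 'm set" where
  "clT R M K = {x \<in> carrier M. K +>\<^bsub>M\<^esub> x \<in> torsT R (quot_mod R M K)}"

definition right_semihereditary :: "'a ring \<Rightarrow> bool" where
  "right_semihereditary R \<longleftrightarrow> ring R \<and>
     (\<forall>I. right_ideal R I \<and> fin_gen R ((RR R)\<lparr>carrier := I\<rparr>) \<longrightarrow>
          projective R ((RR R)\<lparr>carrier := I\<rparr>))"

definition right_nonsingular :: "'a ring \<Rightarrow> bool" where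
  "right_nonsingular R \<longleftrightarrow> nonsingular R (RR R)"

text \<open>Every finitely generated module is a quotient of R^n, hence isomorphic to a module
  whose elements are sets of functions nat \<Rightarrow> 'a; we quantify over those.\<close>
definition right_strongly_semihereditary :: "'a ring \<Rightarrow> bool" where
  "right_strongly_semihereditary R \<longleftrightarrow> ring R \<and> right_nonsingular R \<and>
     (\<forall>N :: ('a, (nat \<Rightarrow> 'a) set) module.
        right_module R N \<and> fin_gen R N \<and> nonsingular R N \<longrightarrow> projective R N)"

definition baer_ring :: "('b, 'c) ring_scheme \<Rightarrow> bool" where
  "baer_ring A \<longleftrightarrow> (\<forall>S \<subseteq> carrier A. \<exists>e\<in>carrier A. e \<otimes>\<^bsub>A\<^esub> e = e \<and>
      {x \<in> carrier A. \<forall>s\<in>S. s \<otimes>\<^bsub>A\<^esub> x = \<zero>\<^bsub>A\<^esub>} = {e \<otimes>\<^bsub>A\<^esub> r | r. r \<in> carrier A})"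

definition matring :: "'a ring \<Rightarrow> nat \<Rightarrow> (nat \<Rightarrow> nat \<Rightarrow> 'a) ring" where
  "matring R n = \<lparr>carrier = {A. \<forall>i j. (i < n \<and> j < n \<longrightarrow> A i j \<in> carrier R) \<and>
                                      (\<not> (i < n \<and> j < n) \<longrightarrow> A i j = \<zero>\<^bsub>R\<^esub>)},
     mult = (\<lambda>A B i j. if i < n \<and> j < n then (\<Oplus>\<^bsub>R\<^esub> k\<in>{..<n}. A i k \<otimes>\<^bsub>R\<^esub> B k j) else \<zero>\<^bsub>R\<^esub>),
     one = (\<lambda>i j. if i < n \<and> j < n \<and> i = j then \<one>\<^bsub>R\<^esub> else \<zero>\<^bsub>R\<^esub>),
     zero = (\<lambda>i j. \<zero>\<^bsub>R\<^esub>),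
     add = (\<lambda>A B i j. if i < n \<and> j < n then A i j \<oplus>\<^bsub>R\<^esub> B i j else \<zero>\<^bsub>R\<^esub>)\<rparr>"

end

theory Submission
  imports Defs
begin

text \<open>
  Let M be generated by s_1, ..., s_n and let H be the set of forms M \<rightarrow> R vanishing on K. In the
  Baer ring M_n(R) the right annihilator of the rows (f s_1, ..., f s_n), f \<in> H, is e M_n(R) for an
  idempotent e. Writing x = \<Sum> c_i s_i, the coordinates g_i x = c_i - (e c)_i do not depend on the
  representation, lie in H, and x - \<Sum> g_i x \<cdot> s_i lies in the common kernel C of H. So C is a direct
  summand, complemented by the image of x \<mapsto> \<Sum> g_i x \<cdot> s_i, and M / C is finitely generated
  projective since the g_i and the images of the s_i form a dual basis. For finitely generated M the bounded part is C for K = 0, since a form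
  on C extends along the retraction onto C; applying this to M / K gives cl_B(K) = C.

  If R is right strongly semihereditary, M / Z(M) is finitely generated and nonsingular, hence
  projective and separated by forms, so B M \<subseteq> Z(M); conversely forms vanish on Z(M) because R is
  right nonsingular. Hence B and T agree on finitely generated modules, and cl_T(K) = cl_B(K)
  follows by applying this to M / K.
\<close>

section \<open>Right modules\<close>

lemma (in abelian_group) minus_eq_zero_iff:
  "a \<in> carrier G \<Longrightarrow> b \<in> carrier G \<Longrightarrow> a \<ominus> b = \<zero> \<longleftrightarrow> a = b"
  by (metis a_assoc a_inv_closed l_neg minus_eq r_neg r_zero)

locale right_mod =
  fixes R :: "'a ring" and M :: "('a,'m) module"
  assumes right_module: "right_module R M"
begin

sublocale R: ring R using right_module unfolding right_module_def by blast
sublocale M: abelian_group M using right_module unfolding right_module_def by blast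

lemma smult_closed [simp, intro]: "r \<in> carrier R \<Longrightarrow> x \<in> carrier M \<Longrightarrow> smult M r x \<in> carrier M"
  using right_module unfolding right_module_def by blast

lemma smult_add_left:
  "r \<in> carrier R \<Longrightarrow> s \<in> carrier R \<Longrightarrow> x \<in> carrier M \<Longrightarrow>
   smult M (r \<oplus>\<^bsub>R\<^esub> s) x = smult M r x \<oplus>\<^bsub>M\<^esub> smult M s x"
  using right_module unfolding right_module_def by blast

lemma smult_add_right:
  "r \<in> carrier R \<Longrightarrow> x \<in> carrier M \<Longrightarrow> y \<in> carrier M \<Longrightarrow>
   smult M r (x \<oplus>\<^bsub>M\<^esub> y) = smult M r x \<oplus>\<^bsub>M\<^esub> smult M r y"
  using right_module unfolding right_module_def by blast

lemma smult_mult: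
  "r \<in> carrier R \<Longrightarrow> s \<in> carrier R \<Longrightarrow> x \<in> carrier M \<Longrightarrow>
   smult M (r \<otimes>\<^bsub>R\<^esub> s) x = smult M s (smult M r x)"
  using right_module unfolding right_module_def by blast

lemma smult_one [simp]: "x \<in> carrier M \<Longrightarrow> smult M \<one>\<^bsub>R\<^esub> x = x"
  using right_module unfolding right_module_def by blast

lemma smult_zero_right [simp]: "r \<in> carrier R \<Longrightarrow> smult M r \<zero>\<^bsub>M\<^esub> = \<zero>\<^bsub>M\<^esub>"
  by (metis M.zero_closed M.l_zero M.add.l_cancel_one' smult_add_right smult_closed)

lemma smult_zero_left [simp]: "x \<in> carrier M \<Longrightarrow> smult M \<zero>\<^bsub>R\<^esub> x = \<zero>\<^bsub>M\<^esub>"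
  by (metis R.zero_closed R.l_zero M.add.l_cancel_one' smult_add_left smult_closed)

lemma smult_neg_left:
  "r \<in> carrier R \<Longrightarrow> x \<in> carrier M \<Longrightarrow> smult M (\<ominus>\<^bsub>R\<^esub> r) x = \<ominus>\<^bsub>M\<^esub> smult M r x"
  by (metis M.minus_equality R.a_inv_closed R.l_neg smult_add_left smult_closed smult_zero_left)

lemma smult_neg_right:
  "r \<in> carrier R \<Longrightarrow> x \<in> carrier M \<Longrightarrow> smult M r (\<ominus>\<^bsub>M\<^esub> x) = \<ominus>\<^bsub>M\<^esub> smult M r x"
  by (metis M.minus_equality M.a_inv_closed M.l_neg smult_add_right smult_closed smult_zero_right)

lemma smult_minus_right:
  "r \<in> carrier R \<Longrightarrow> x \<in> carrier M \<Longrightarrow> y \<in> carrier M \<Longrightarrow>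
   smult M r (x \<ominus>\<^bsub>M\<^esub> y) = smult M r x \<ominus>\<^bsub>M\<^esub> smult M r y"
  by (simp add: M.minus_eq smult_add_right smult_neg_right)

lemma smult_finsum_right:
  assumes "finite A" "r \<in> carrier R" "f \<in> A \<rightarrow> carrier M"
  shows "smult M r (finsum M f A) = finsum M (\<lambda>i. smult M r (f i)) A"
  using assms
  by (induct A rule: finite_induct) (simp_all add: Pi_def M.finsum_insert smult_add_right M.finsum_closed)

lemma smult_finsum_left:
  assumes "finite A" "x \<in> carrier M" "f \<in> A \<rightarrow> carrier R"
  shows "smult M (finsum R f A) x = finsum M (\<lambda>i. smult M (f i) x) A"
  using assms
  by (induct A rule: finite_induct)
     (simp_all add: Pi_def M.finsum_insert R.finsum_insert smult_add_left R.finsum_closed)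

lemma submodule_abelian_subgroup:
  assumes "submodule R M K" shows "abelian_subgroup K M"
proof -
  have "additive_subgroup K M"
    using assms unfolding submodule_def additive_subgroup_def
    by (intro subgroup.intro) (auto simp: a_inv_def)
  then show ?thesis by (intro abelian_subgroupI3 M.abelian_group_axioms)
qed

lemma submodule_finsum:
  assumes "submodule R M K" "finite A" "f \<in> A \<rightarrow> K"
  shows "finsum M f A \<in> K"
  using assms(2,3)
proof (induct A rule: finite_induct)
  case empty then show ?case using assms(1) by (simp add: submodule_def)
next
  case (insert x F)
  with assms(1) show ?case
    by (subst M.finsum_insert) (auto simp: submodule_def Pi_def subset_iff)
qed

lemma submodule_zero: "submodule R M {\<zero>\<^bsub>M\<^esub>}"
  unfolding submodule_def by auto

lemma submodule_carrier: "submodule R M (carrier M)"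
  unfolding submodule_def by auto

lemma right_module_restrict:
  assumes K: "submodule R M K" shows "right_module R (M\<lparr>carrier := K\<rparr>)"
proof -
  have sub: "K \<subseteq> carrier M" using K by (simp add: submodule_def)
  have "abelian_group (M\<lparr>carrier := K\<rparr>)"
  proof (rule abelian_groupI, goal_cases)
    case (1 x y) then show ?case using K by (simp add: submodule_def)
  next case 2 then show ?case using K by (simp add: submodule_def)
  next case (3 x y z) then show ?case using sub by (simp add: M.a_assoc subsetD)
  next case (4 x y) then show ?case using sub by (simp add: M.a_comm subsetD)
  next case (5 x) then show ?case using sub by (simp add: subsetD)
  next case (6 x) then show ?case using K sub
      by (intro bexI[of _ "\<ominus>\<^bsub>M\<^esub> x"]) (auto simp: submodule_def subsetD M.l_neg)
  qed
  then show ?thesis unfolding right_module_def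
    using K sub R.ring_axioms smult_add_left smult_add_right smult_mult
    by (auto simp: submodule_def subset_iff)
qed

end

lemma right_modI: "right_module R M \<Longrightarrow> right_mod R M"
  by (rule right_mod.intro)

locale right_mod_hom = M: right_mod R M + N: right_mod R N
  for R :: "'a ring" and M :: "('a,'m) module" and N :: "('a,'n) module" +
  fixes h assumes hom: "module_hom R M N h"
begin

lemma hom_closed [simp, intro]: "x \<in> carrier M \<Longrightarrow> h x \<in> carrier N"
  using hom unfolding module_hom_def by blast

lemma hom_add: "x \<in> carrier M \<Longrightarrow> y \<in> carrier M \<Longrightarrow> h (x \<oplus>\<^bsub>M\<^esub> y) = h x \<oplus>\<^bsub>N\<^esub> h y"
  using hom unfolding module_hom_def by blast

lemma hom_smult: "x \<in> carrier M \<Longrightarrow> r \<in> carrier R \<Longrightarrow> h (smult M r x) = smult N r (h x)"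
  using hom unfolding module_hom_def by blast

lemma hom_zero [simp]: "h \<zero>\<^bsub>M\<^esub> = \<zero>\<^bsub>N\<^esub>"
  by (metis M.M.zero_closed M.M.l_zero N.M.add.l_cancel_one' hom_add hom_closed)

lemma hom_neg: "x \<in> carrier M \<Longrightarrow> h (\<ominus>\<^bsub>M\<^esub> x) = \<ominus>\<^bsub>N\<^esub> h x"
  by (metis M.M.a_inv_closed M.M.l_neg N.M.minus_equality hom_add hom_closed hom_zero)

lemma hom_minus: "x \<in> carrier M \<Longrightarrow> y \<in> carrier M \<Longrightarrow> h (x \<ominus>\<^bsub>M\<^esub> y) = h x \<ominus>\<^bsub>N\<^esub> h y"
  by (simp add: M.M.minus_eq N.M.minus_eq hom_add hom_neg)

lemma hom_finsum:
  assumes "finite A" "f \<in> A \<rightarrow> carrier M"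
  shows "h (finsum M f A) = finsum N (\<lambda>i. h (f i)) A"
  using assms
  by (induct A rule: finite_induct) (simp_all add: Pi_def M.M.finsum_insert N.M.finsum_insert hom_add M.M.finsum_closed)

lemma kernel_submodule: "submodule R M {x \<in> carrier M. h x = \<zero>\<^bsub>N\<^esub>}"
  unfolding submodule_def by (auto simp: hom_add hom_smult hom_neg)

lemma image_submodule: "submodule R N (h ` carrier M)"
  unfolding submodule_def
proof (intro conjI ballI)
  show "\<zero>\<^bsub>N\<^esub> \<in> h ` carrier M" using hom_zero[symmetric] by blast
next
  fix x y assume "x \<in> h ` carrier M" "y \<in> h ` carrier M"
  then show "x \<oplus>\<^bsub>N\<^esub> y \<in> h ` carrier M" by (auto simp: hom_add[symmetric])
next
  fix x assume "x \<in> h ` carrier M"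
  then show "\<ominus>\<^bsub>N\<^esub> x \<in> h ` carrier M" by (auto simp: hom_neg[symmetric])
next
  fix x r assume "x \<in> h ` carrier M" "r \<in> carrier R"
  then show "smult N r x \<in> h ` carrier M" by (auto simp: hom_smult[symmetric])
qed auto

lemma preimage_submodule:
  assumes "submodule R N S" shows "submodule R M {x \<in> carrier M. h x \<in> S}"
  using assms unfolding submodule_def by (auto simp: hom_add hom_neg hom_smult)

end

lemma right_mod_homI:
  "right_module R M \<Longrightarrow> right_module R N \<Longrightarrow> module_hom R M N h \<Longrightarrow> right_mod_hom R M N h"
  by (simp add: right_mod_hom_def right_mod_def right_mod_hom_axioms_def)

lemma module_hom_comp: "module_hom R M N f \<Longrightarrow> module_hom R N P g \<Longrightarrow> module_hom R M P (g \<circ> f)"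
  unfolding module_hom_def by auto

locale right_mod_quot = right_mod +
  fixes K assumes submodule: "submodule R M K"
begin

abbreviation Q where "Q \<equiv> quot_mod R M K"

interpretation K: abelian_subgroup K M by (rule submodule_abelian_subgroup[OF submodule])

lemma K_subset: "K \<subseteq> carrier M" using submodule by (simp add: submodule_def)

lemma quot_carrier: "carrier Q = {K +>\<^bsub>M\<^esub> x | x. x \<in> carrier M}"
  by (simp add: quot_mod_def)

lemma coset_in_quot [simp, intro]: "x \<in> carrier M \<Longrightarrow> K +>\<^bsub>M\<^esub> x \<in> carrier Q"
  by (auto simp: quot_carrier)

lemma quot_cases: "A \<in> carrier Q \<Longrightarrow> (\<And>x. x \<in> carrier M \<Longrightarrow> A = K +>\<^bsub>M\<^esub> x \<Longrightarrow> P) \<Longrightarrow> P"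
  by (auto simp: quot_carrier)

lemma quot_add:
  "x \<in> carrier M \<Longrightarrow> y \<in> carrier M \<Longrightarrow>
   (K +>\<^bsub>M\<^esub> x) \<oplus>\<^bsub>Q\<^esub> (K +>\<^bsub>M\<^esub> y) = K +>\<^bsub>M\<^esub> (x \<oplus>\<^bsub>M\<^esub> y)"
  by (simp add: quot_mod_def K.a_rcos_sum)

lemma coset_zero: "K +>\<^bsub>M\<^esub> \<zero>\<^bsub>M\<^esub> = K"
  using submodule by (simp add: K.a_rcos_const submodule_def)

lemma quot_zero: "\<zero>\<^bsub>Q\<^esub> = K +>\<^bsub>M\<^esub> \<zero>\<^bsub>M\<^esub>"
  by (simp add: quot_mod_def coset_zero)

lemma coset_eq_iff:
  assumes x: "x \<in> carrier M" and y: "y \<in> carrier M"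
  shows "K +>\<^bsub>M\<^esub> x = K +>\<^bsub>M\<^esub> y \<longleftrightarrow> x \<ominus>\<^bsub>M\<^esub> y \<in> K"
proof
  assume "K +>\<^bsub>M\<^esub> x = K +>\<^bsub>M\<^esub> y"
  then have "x \<in> K +>\<^bsub>M\<^esub> y" using K.a_rcos_self[OF x] by simp
  then show "x \<ominus>\<^bsub>M\<^esub> y \<in> K" using K.a_rcos_module_imp[OF y] by (simp add: a_minus_def)
next
  assume "x \<ominus>\<^bsub>M\<^esub> y \<in> K"
  then have "x \<in> K +>\<^bsub>M\<^esub> y" using K.a_rcos_module_rev[OF y x] by (simp add: a_minus_def)
  then show "K +>\<^bsub>M\<^esub> x = K +>\<^bsub>M\<^esub> y" using K.a_repr_independence'[OF _ y] by simp
qed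

lemma coset_eq_K_iff: "x \<in> carrier M \<Longrightarrow> K +>\<^bsub>M\<^esub> x = K \<longleftrightarrow> x \<in> K"
  using coset_eq_iff[of x "\<zero>\<^bsub>M\<^esub>"] M.minus_equality[of "\<zero>\<^bsub>M\<^esub>" "\<zero>\<^bsub>M\<^esub>"]
  by (simp add: coset_zero M.minus_eq)

lemma some_coset_rep:
  assumes x: "x \<in> carrier M"
  shows "(SOME a. a \<in> K +>\<^bsub>M\<^esub> x) \<in> carrier M" "(SOME a. a \<in> K +>\<^bsub>M\<^esub> x) \<ominus>\<^bsub>M\<^esub> x \<in> K"
proof -
  have "(SOME a. a \<in> K +>\<^bsub>M\<^esub> x) \<in> K +>\<^bsub>M\<^esub> x" using K.a_rcos_self[OF x] by (rule someI)
  then show "(SOME a. a \<in> K +>\<^bsub>M\<^esub> x) \<in> carrier M" "(SOME a. a \<in> K +>\<^bsub>M\<^esub> x) \<ominus>\<^bsub>M\<^esub> x \<in> K"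
    using K.a_elemrcos_carrier[OF x] K.a_rcos_module_imp[OF x] by (auto simp: a_minus_def)
qed

lemma quot_smult:
  assumes x: "x \<in> carrier M" and r: "r \<in> carrier R"
  shows "smult Q r (K +>\<^bsub>M\<^esub> x) = K +>\<^bsub>M\<^esub> smult M r x"
proof -
  define a where "a = (SOME a. a \<in> K +>\<^bsub>M\<^esub> x)"
  have a: "a \<in> carrier M" "a \<ominus>\<^bsub>M\<^esub> x \<in> K" using some_coset_rep[OF x] by (auto simp: a_def)
  then have "smult M r a \<ominus>\<^bsub>M\<^esub> smult M r x \<in> K"
    using smult_minus_right[OF r a(1) x] submodule r unfolding submodule_def by metis
  then show ?thesis using coset_eq_iff a x r by (simp add: quot_mod_def a_def)
qed

lemma quot_right_module: "right_module R Q"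
proof -
  have "abelian_group Q"
  proof (rule abelian_groupI, goal_cases)
    case (1 x y) then show ?case by (auto elim!: quot_cases simp: quot_add)
  next case 2 then show ?case by (simp add: quot_zero)
  next case (3 x y z) then show ?case by (auto elim!: quot_cases simp: quot_add M.a_assoc)
  next case (4 x y) then show ?case by (auto elim!: quot_cases simp: quot_add M.a_comm)
  next case (5 x) then show ?case by (auto elim!: quot_cases simp: quot_add quot_zero)
  next case (6 x) then show ?case
      by (auto elim!: quot_cases simp: quot_add quot_zero M.l_neg
               intro!: bexI[of _ "K +>\<^bsub>M\<^esub> (\<ominus>\<^bsub>M\<^esub> _)"])
  qed
  then show ?thesis
    unfolding right_module_def
    by (auto elim!: quot_cases simp: R.ring_axioms quot_smult quot_add smult_add_left smult_add_right smult_mult)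
qed

sublocale Q: right_mod R Q by (rule right_modI[OF quot_right_module])

lemma quot_map_hom: "module_hom R M Q (\<lambda>x. K +>\<^bsub>M\<^esub> x)"
  unfolding module_hom_def by (auto simp: quot_add quot_smult)

sublocale quot_map: right_mod_hom R M Q "\<lambda>x. K +>\<^bsub>M\<^esub> x"
  by (intro right_mod_homI right_module quot_right_module quot_map_hom)

lemma induced_hom:
  assumes N: "right_module R N" and f: "module_hom R M N f" and kill: "\<forall>k\<in>K. f k = \<zero>\<^bsub>N\<^esub>"
  shows "module_hom R Q N (\<lambda>A. f (SOME a. a \<in> A))"
    and "\<And>x. x \<in> carrier M \<Longrightarrow> f (SOME a. a \<in> K +>\<^bsub>M\<^esub> x) = f x"
proof -
  interpret f: right_mod_hom R M N f by (intro right_mod_homI right_module N f)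
  show ev: "f (SOME a. a \<in> K +>\<^bsub>M\<^esub> x) = f x" if x: "x \<in> carrier M" for x
  proof -
    note a = some_coset_rep[OF x]
    have "f (SOME a. a \<in> K +>\<^bsub>M\<^esub> x) \<ominus>\<^bsub>N\<^esub> f x = \<zero>\<^bsub>N\<^esub>"
      using f.hom_minus[OF a(1) x] kill a(2) by simp
    then show ?thesis using a(1) x by (simp add: f.N.M.minus_eq_zero_iff)
  qed
  show "module_hom R Q N (\<lambda>A. f (SOME a. a \<in> A))"
    unfolding module_hom_def by (auto elim!: quot_cases simp: quot_add quot_smult ev f.hom_add f.hom_smult)
qed

end

lemma right_mod_quotI: "right_module R M \<Longrightarrow> submodule R M K \<Longrightarrow> right_mod_quot R M K"
  by (simp add: right_mod_quot_def right_mod_def right_mod_quot_axioms_def)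

lemma RR_simps [simp]:
  "carrier (RR R) = carrier R" "add (RR R) = add R" "zero (RR R) = zero R"
  "smult (RR R) r x = x \<otimes>\<^bsub>R\<^esub> r" "mult (RR R) = mult R"
  by (simp_all add: RR_def)

lemma RR_right_module: "ring R \<Longrightarrow> right_module R (RR R)"
proof -
  assume R: "ring R"
  interpret R: ring R by (rule R)
  have "abelian_group (RR R)"
    by (rule abelian_groupI) (auto simp: R.a_ac intro: R.l_neg)
  then show ?thesis unfolding right_module_def
    using R by (auto simp: R.l_distr R.r_distr R.m_assoc)
qed

lemma RR_a_inv: "ring R \<Longrightarrow> x \<in> carrier R \<Longrightarrow> \<ominus>\<^bsub>RR R\<^esub> x = \<ominus>\<^bsub>R\<^esub> x"
proof -
  assume R: "ring R" and x: "x \<in> carrier R"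
  interpret R: ring R by (rule R)
  interpret RR: right_mod R "RR R" by (intro right_modI RR_right_module R)
  show ?thesis by (rule RR.M.minus_equality) (use x in \<open>auto intro: R.l_neg\<close>)
qed

lemma free_mod_simps [simp]:
  "add (free_mod R I) f g = (\<lambda>i. f i \<oplus>\<^bsub>R\<^esub> g i)"
  "zero (free_mod R I) = (\<lambda>i. \<zero>\<^bsub>R\<^esub>)" "smult (free_mod R I) r f = (\<lambda>i. f i \<otimes>\<^bsub>R\<^esub> r)"
  by (simp_all add: free_mod_def)

lemma free_mod_carrier:
  "f \<in> carrier (free_mod R I) \<longleftrightarrow>
   (\<forall>i\<in>I. f i \<in> carrier R) \<and> (\<forall>i. i \<notin> I \<longrightarrow> f i = \<zero>\<^bsub>R\<^esub>) \<and> finite {i. f i \<noteq> \<zero>\<^bsub>R\<^esub>}"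
  by (simp add: free_mod_def)

lemma free_mod_right_module:
  fixes I :: "'i set" assumes R: "ring R" shows "right_module R (free_mod R I)"
proof -
  interpret R: ring R by (rule R)
  have support_add: "finite {i. f i \<oplus>\<^bsub>R\<^esub> g i \<noteq> \<zero>\<^bsub>R\<^esub>}"
    if "finite {i. f i \<noteq> \<zero>\<^bsub>R\<^esub>}" "finite {i. g i \<noteq> \<zero>\<^bsub>R\<^esub>}"
       "\<forall>i. f i \<in> carrier R" "\<forall>i. g i \<in> carrier R" for f g
    by (rule finite_subset[OF _ finite_UnI[OF that(1,2)]]) (auto simp: that)
  have support_mult: "finite {i. f i \<otimes>\<^bsub>R\<^esub> r \<noteq> \<zero>\<^bsub>R\<^esub>}"
    if "finite {i. f i \<noteq> \<zero>\<^bsub>R\<^esub>}" "\<forall>i. f i \<in> carrier R" "r \<in> carrier R" for f :: "'i \<Rightarrow> 'a" and r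
    by (rule finite_subset[OF _ that(1)]) (auto simp: that)
  have support_neg: "finite {i. \<ominus>\<^bsub>R\<^esub> f i \<noteq> \<zero>\<^bsub>R\<^esub>}"
    if "finite {i. f i \<noteq> \<zero>\<^bsub>R\<^esub>}" "\<forall>i. f i \<in> carrier R" for f :: "'i \<Rightarrow> 'a"
    by (rule finite_subset[OF _ that(1)]) (auto simp: that)
  have entries: "\<forall>i. f i \<in> carrier R" if "f \<in> carrier (free_mod R I)" for f
    using that by (auto simp: free_mod_carrier)
  have "abelian_group (free_mod R I)"
  proof (rule abelian_groupI, goal_cases)
    case (1 x y) then show ?case using entries[OF 1(1)] entries[OF 1(2)] support_add[of x y]
        by (auto simp: free_mod_carrier)
  next case 2 then show ?case by (simp add: free_mod_carrier)
  next case (3 x y z) then show ?case using entries[OF 3(1)] entries[OF 3(2)] entries[OF 3(3)]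
      by (auto simp: R.a_assoc)
  next case (4 x y) then show ?case using entries[OF 4(1)] entries[OF 4(2)] by (auto simp: R.a_comm)
  next case (5 x) then show ?case using entries[OF 5(1)] by auto
  next case (6 x) then show ?case using entries[OF 6(1)] support_neg[of x]
      by (intro bexI[of _ "\<lambda>i. \<ominus>\<^bsub>R\<^esub> x i"]) (auto simp: free_mod_carrier intro: R.l_neg)
  qed
  then show ?thesis unfolding right_module_def
  proof (intro conjI ballI)
  qed (use R entries support_mult in \<open>auto simp: free_mod_carrier R.l_distr R.r_distr R.m_assoc\<close>)
qed

lemma free_mod_entry_closed:
  assumes R: "ring R" and f: "f \<in> carrier (free_mod R I)" shows "f i \<in> carrier R"
proof -
  interpret R: ring R by (rule R)
  show ?thesis using f by (cases "i \<in> I") (auto simp: free_mod_carrier)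
qed

lemma free_mod_finsum_apply:
  assumes R: "ring R" and fin: "finite A" and f: "f \<in> A \<rightarrow> carrier (free_mod R I)"
  shows "finsum (free_mod R I) f A j = finsum R (\<lambda>i. f i j) A"
proof -
  interpret F: right_mod R "free_mod R I" by (intro right_modI free_mod_right_module R)
  show ?thesis using fin f
  proof (induct A rule: finite_induct)
    case (insert x A)
    then have "finsum (free_mod R I) f (insert x A) j = f x j \<oplus>\<^bsub>R\<^esub> finsum R (\<lambda>i. f i j) A"
      by (subst F.M.finsum_insert) auto
    also have "\<dots> = finsum R (\<lambda>i. f i j) (insert x A)"
      using insert by (subst F.R.finsum_insert) (auto simp: Pi_def intro: free_mod_entry_closed[OF R])
    finally show ?case .
  qed simp
qed

abbreviation lincomb :: "('a, 'm) module \<Rightarrow> (nat \<Rightarrow> 'a) \<Rightarrow> (nat \<Rightarrow> 'm) \<Rightarrow> nat \<Rightarrow> 'm" where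
  "lincomb M c s n \<equiv> finsum M (\<lambda>i. smult M (c i) (s i)) {..<n}"

definition generates :: "'a ring \<Rightarrow> ('a, 'm) module \<Rightarrow> nat \<Rightarrow> (nat \<Rightarrow> 'm) \<Rightarrow> bool" where
  "generates R M n s \<longleftrightarrow> (\<forall>i<n. s i \<in> carrier M) \<and>
     (\<forall>x\<in>carrier M. \<exists>c. (\<forall>i<n. c i \<in> carrier R) \<and> x = lincomb M c s n)"

context right_mod begin

lemma lincomb_closed:
  "\<forall>i<n. c i \<in> carrier R \<Longrightarrow> \<forall>i<n. s i \<in> carrier M \<Longrightarrow> lincomb M c s n \<in> carrier M"
  by (intro M.finsum_closed) auto

lemma lincomb_add:
  assumes "\<forall>i<n. c i \<in> carrier R" "\<forall>i<n. d i \<in> carrier R" "\<forall>i<n. s i \<in> carrier M"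
  shows "lincomb M (\<lambda>i. c i \<oplus>\<^bsub>R\<^esub> d i) s n = lincomb M c s n \<oplus>\<^bsub>M\<^esub> lincomb M d s n"
proof -
  have "lincomb M (\<lambda>i. c i \<oplus>\<^bsub>R\<^esub> d i) s n
      = finsum M (\<lambda>i. smult M (c i) (s i) \<oplus>\<^bsub>M\<^esub> smult M (d i) (s i)) {..<n}"
    by (rule M.finsum_cong') (use assms in \<open>auto simp: smult_add_left\<close>)
  also have "\<dots> = lincomb M c s n \<oplus>\<^bsub>M\<^esub> lincomb M d s n"
    by (rule M.finsum_addf) (use assms in auto)
  finally show ?thesis .
qed

lemma lincomb_smult:
  assumes "\<forall>i<n. c i \<in> carrier R" "r \<in> carrier R" "\<forall>i<n. s i \<in> carrier M"
  shows "lincomb M (\<lambda>i. c i \<otimes>\<^bsub>R\<^esub> r) s n = smult M r (lincomb M c s n)"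
proof -
  have "smult M r (lincomb M c s n) = finsum M (\<lambda>i. smult M r (smult M (c i) (s i))) {..<n}"
    by (rule smult_finsum_right) (use assms in auto)
  also have "\<dots> = lincomb M (\<lambda>i. c i \<otimes>\<^bsub>R\<^esub> r) s n"
    by (rule M.finsum_cong') (use assms in \<open>auto simp: smult_mult\<close>)
  finally show ?thesis ..
qed

lemma lincomb_minus:
  assumes c: "\<forall>i<n. c i \<in> carrier R" and d: "\<forall>i<n. d i \<in> carrier R" and s: "\<forall>i<n. s i \<in> carrier M"
  shows "lincomb M (\<lambda>i. c i \<ominus>\<^bsub>R\<^esub> d i) s n = lincomb M c s n \<ominus>\<^bsub>M\<^esub> lincomb M d s n"
proof -
  have "lincomb M (\<lambda>i. c i \<ominus>\<^bsub>R\<^esub> d i) s n = lincomb M (\<lambda>i. c i \<oplus>\<^bsub>R\<^esub> d i \<otimes>\<^bsub>R\<^esub> \<ominus>\<^bsub>R\<^esub> \<one>\<^bsub>R\<^esub>) s n"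
    by (rule M.finsum_cong') (use c d s in \<open>auto simp: R.minus_eq R.r_minus\<close>)
  also have "\<dots> = lincomb M c s n \<oplus>\<^bsub>M\<^esub> smult M (\<ominus>\<^bsub>R\<^esub> \<one>\<^bsub>R\<^esub>) (lincomb M d s n)"
    using c d s by (simp add: lincomb_add lincomb_smult)
  also have "\<dots> = lincomb M c s n \<ominus>\<^bsub>M\<^esub> lincomb M d s n"
    using d s lincomb_closed by (simp add: smult_neg_left M.minus_eq)
  finally show ?thesis .
qed

lemma lincomb_submodule:
  assumes s: "\<forall>i<n. s i \<in> carrier M"
  shows "submodule R M {lincomb M c s n | c. \<forall>i<n. c i \<in> carrier R}"
    (is "submodule R M ?L")
  unfolding submodule_def
proof (intro conjI ballI)
  show "?L \<subseteq> carrier M" using s by (auto intro!: lincomb_closed)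
  have "lincomb M (\<lambda>i. \<zero>\<^bsub>R\<^esub>) s n = finsum M (\<lambda>i. \<zero>\<^bsub>M\<^esub>) {..<n}"
    by (rule M.finsum_cong') (use s in auto)
  then show "\<zero>\<^bsub>M\<^esub> \<in> ?L" by (intro CollectI exI[of _ "\<lambda>i. \<zero>\<^bsub>R\<^esub>"]) simp
next
  fix x y assume "x \<in> ?L" "y \<in> ?L"
  then obtain c d where c: "\<forall>i<n. c i \<in> carrier R" "x = lincomb M c s n"
    and d: "\<forall>i<n. d i \<in> carrier R" "y = lincomb M d s n" by blast
  then have "x \<oplus>\<^bsub>M\<^esub> y = lincomb M (\<lambda>i. c i \<oplus>\<^bsub>R\<^esub> d i) s n" using lincomb_add[OF c(1) d(1) s] by simp
  then show "x \<oplus>\<^bsub>M\<^esub> y \<in> ?L" using c d by (intro CollectI exI[of _ "\<lambda>i. c i \<oplus>\<^bsub>R\<^esub> d i"]) auto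
next
  fix x r assume "x \<in> ?L" and r: "r \<in> carrier R"
  then obtain c where c: "\<forall>i<n. c i \<in> carrier R" "x = lincomb M c s n" by blast
  then have "smult M r x = lincomb M (\<lambda>i. c i \<otimes>\<^bsub>R\<^esub> r) s n" using lincomb_smult[OF c(1) r s] by simp
  then show "smult M r x \<in> ?L" using c r by (intro CollectI exI[of _ "\<lambda>i. c i \<otimes>\<^bsub>R\<^esub> r"]) auto
next
  fix x assume "x \<in> ?L"
  then obtain c where c: "\<forall>i<n. c i \<in> carrier R" "x = lincomb M c s n" by blast
  have "\<ominus>\<^bsub>M\<^esub> x = smult M (\<ominus>\<^bsub>R\<^esub> \<one>\<^bsub>R\<^esub>) x"
    using c s lincomb_closed by (simp add: smult_neg_left)
  also have "\<dots> = lincomb M (\<lambda>i. c i \<otimes>\<^bsub>R\<^esub> (\<ominus>\<^bsub>R\<^esub> \<one>\<^bsub>R\<^esub>)) s n"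
    using lincomb_smult[OF c(1) _ s] c(2) by simp
  finally show "\<ominus>\<^bsub>M\<^esub> x \<in> ?L"
    using c by (intro CollectI exI[of _ "\<lambda>i. c i \<otimes>\<^bsub>R\<^esub> (\<ominus>\<^bsub>R\<^esub> \<one>\<^bsub>R\<^esub>)"]) auto
qed

lemma fin_gen_if_generates:
  assumes "generates R M n s" shows "fin_gen R M"
  unfolding fin_gen_def
proof (intro exI conjI)
  have s: "\<forall>i<n. s i \<in> carrier M"
    and all: "\<forall>x\<in>carrier M. \<exists>c. (\<forall>i<n. c i \<in> carrier R) \<and> x = lincomb M c s n"
    using assms unfolding generates_def by (fact conjunct1, fact conjunct2)
  show "finite (s ` {..<n})" by simp
  show S: "s ` {..<n} \<subseteq> carrier M" using s by auto
  have "x \<in> K" if x: "x \<in> carrier M" and K: "submodule R M K" and sK: "s ` {..<n} \<subseteq> K" for x K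
  proof -
    obtain c where c: "\<forall>i<n. c i \<in> carrier R" "x = lincomb M c s n"
      using bspec[OF all x] by (elim exE conjE)
    have "smult M (c i) (s i) \<in> K" if "i < n" for i
      using that c(1) sK K unfolding submodule_def by blast
    then have "lincomb M c s n \<in> K" by (intro submodule_finsum[OF K]) auto
    then show ?thesis using c(2) by simp
  qed
  moreover have "span R M (s ` {..<n}) \<subseteq> carrier M"
    unfolding span_def using submodule_carrier S by blast
  ultimately show "span R M (s ` {..<n}) = carrier M"
    unfolding span_def by blast
qed

lemma generates_if_fin_gen:
  assumes "fin_gen R M"
  obtains n s where "n \<ge> 1" "generates R M n s"
proof -
  obtain S where S: "finite S" "S \<subseteq> carrier M" "span R M S = carrier M"
    using assms unfolding fin_gen_def by blast
  obtain m t where St: "S = t ` {i. i < (m::nat)}"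
    using finite_conv_nat_seg_image[THEN iffD1, OF S(1)] by blast
  define s where "s i = (if i < m then t i else \<zero>\<^bsub>M\<^esub>)" for i
  have s: "\<forall>i<Suc m. s i \<in> carrier M" using S(2) St by (auto simp: s_def)
  let ?L = "{lincomb M c s (Suc m) | c. \<forall>i<Suc m. c i \<in> carrier R}"
  have sL: "s j \<in> ?L" if "j < Suc m" for j
  proof -
    have "lincomb M (\<lambda>i. if i = j then \<one>\<^bsub>R\<^esub> else \<zero>\<^bsub>R\<^esub>) s (Suc m)
        = finsum M (\<lambda>i. if i = j then s i else \<zero>\<^bsub>M\<^esub>) {..<Suc m}"
      by (rule M.finsum_cong') (use s in auto)
    also have "\<dots> = s j" using s that by (intro M.add.finprod_singleton_swap) auto
    finally show ?thesis by (intro CollectI exI[of _ "\<lambda>i. if i = j then \<one>\<^bsub>R\<^esub> else \<zero>\<^bsub>R\<^esub>"]) auto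
  qed
  have "S \<subseteq> ?L"
  proof
    fix y assume "y \<in> S"
    then obtain j where "j < m" "y = t j" using St by auto
    then show "y \<in> ?L" using sL[of j] by (simp add: s_def)
  qed
  then have "carrier M \<subseteq> ?L"
    using S(3) lincomb_submodule[OF s] unfolding span_def by blast
  then have "generates R M (Suc m) s"
    using s unfolding generates_def by blast
  then show ?thesis using that[of "Suc m" s] by simp
qed

lemma fin_gen_if_dual_basis:
  assumes xs: "\<forall>i<n. xs i \<in> carrier M" and fs: "\<forall>i<n. module_hom R M (RR R) (fs i)"
    and dual_basis: "\<forall>x\<in>carrier M. x = lincomb M (\<lambda>i. fs i x) xs n"
  shows "fin_gen R M"
proof (rule fin_gen_if_generates)
  show "generates R M n xs"
    unfolding generates_def
  proof (intro conjI ballI)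
    fix x assume x: "x \<in> carrier M"
    have "\<forall>i<n. fs i x \<in> carrier R" using fs x unfolding module_hom_def by auto
    then show "\<exists>c. (\<forall>i<n. c i \<in> carrier R) \<and> x = lincomb M c xs n"
      using bspec[OF dual_basis x] by (intro exI[of _ "\<lambda>i. fs i x"] conjI)
  qed (rule xs)
qed

lemma finsum_restrict:
  assumes D: "submodule R M D" and "finite A" "f \<in> A \<rightarrow> D"
  shows "finsum (M\<lparr>carrier := D\<rparr>) f A = finsum M f A"
proof -
  interpret D: right_mod R "M\<lparr>carrier := D\<rparr>" by (intro right_modI right_module_restrict D)
  have "D \<subseteq> carrier M" using D by (simp add: submodule_def)
  with assms(2,3) show ?thesis
  proof (induct A rule: finite_induct)
    case (insert x A)
    then show ?case by (simp add: D.M.finsum_insert M.finsum_insert Pi_def subset_iff)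
  qed simp
qed

lemma lincomb_free_mod_hom:
  assumes s: "\<forall>i<n. s i \<in> carrier M"
  shows "module_hom R (free_mod R {..<n}) M (\<lambda>c. lincomb M c s n)"
  unfolding module_hom_def
proof (intro conjI ballI)
  note entries = free_mod_entry_closed[OF R.ring_axioms]
  fix c d assume c: "c \<in> carrier (free_mod R {..<n})" and d: "d \<in> carrier (free_mod R {..<n})"
  show "lincomb M c s n \<in> carrier M" using entries[OF c] s by (simp add: lincomb_closed)
  show "lincomb M (c \<oplus>\<^bsub>free_mod R {..<n}\<^esub> d) s n = lincomb M c s n \<oplus>\<^bsub>M\<^esub> lincomb M d s n"
    using lincomb_add[of n c d s] entries[OF c] entries[OF d] s by simp
next
  fix c r assume c: "c \<in> carrier (free_mod R {..<n})" and r: "r \<in> carrier R"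
  show "lincomb M (smult (free_mod R {..<n}) r c) s n = smult M r (lincomb M c s n)"
    using lincomb_smult[of n c r s] free_mod_entry_closed[OF R.ring_axioms c] r s by simp
qed

lemma lincomb_free_mod_surj:
  assumes gen: "generates R M n s" and y: "y \<in> carrier M"
  shows "\<exists>c\<in>carrier (free_mod R {..<n}). lincomb M c s n = y"
proof -
  obtain c where c: "\<forall>i<n. c i \<in> carrier R" "y = lincomb M c s n"
    using bspec[OF conjunct2[OF gen[unfolded generates_def]] y] by (elim exE conjE)
  define c' where "c' = (\<lambda>i. if i < n then c i else \<zero>\<^bsub>R\<^esub>)"
  have "c' \<in> carrier (free_mod R {..<n})"
    unfolding free_mod_carrier c'_def using c(1) by (auto intro: finite_subset[of _ "{..<n}"])
  moreover have "lincomb M c' s n = y"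
    unfolding c(2) by (rule M.finsum_cong') (use c(1) gen in \<open>auto simp: c'_def generates_def\<close>)
  ultimately show ?thesis by blast
qed

end

lemma free_mod_generates:
  assumes R: "ring R"
  shows "generates R (free_mod R {..<n}) n (\<lambda>i j. if j = i then \<one>\<^bsub>R\<^esub> else \<zero>\<^bsub>R\<^esub>)"
    (is "generates R ?V n ?\<delta>")
  unfolding generates_def
proof (intro conjI ballI allI impI)
  interpret V: right_mod R ?V by (intro right_modI free_mod_right_module R)
  show \<delta>: "?\<delta> i \<in> carrier ?V" if "i < n" for i
    using that by (auto simp: free_mod_carrier intro: finite_subset[of _ "{i}"])
  fix v assume v: "v \<in> carrier ?V"
  have "lincomb ?V v ?\<delta> n j = v j" for j
  proof -
    have "lincomb ?V v ?\<delta> n j = finsum R (\<lambda>i. smult ?V (v i) (?\<delta> i) j) {..<n}"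
      by (rule free_mod_finsum_apply[OF R]) (use V.smult_closed[OF free_mod_entry_closed[OF R v] \<delta>] in auto)
    also have "\<dots> = finsum R (\<lambda>i. if i = j then v i else \<zero>\<^bsub>R\<^esub>) {..<n}"
      by (rule V.R.finsum_cong') (use free_mod_entry_closed[OF R v] in auto)
    also have "\<dots> = v j"
    proof (cases "j < n")
      case True then show ?thesis
        using free_mod_entry_closed[OF R v] by (intro V.R.add.finprod_singleton_swap) auto
    next
      case False
      then have "finsum R (\<lambda>i. if i = j then v i else \<zero>\<^bsub>R\<^esub>) {..<n} = finsum R (\<lambda>i. \<zero>\<^bsub>R\<^esub>) {..<n}"
        by (intro V.R.finsum_cong') auto
      then show ?thesis using v False by (simp add: free_mod_carrier)
    qed
    finally show ?thesis .
  qed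
  then show "\<exists>c. (\<forall>i<n. c i \<in> carrier R) \<and> v = lincomb ?V c ?\<delta> n"
    using free_mod_entry_closed[OF R v] by (intro exI[of _ v] conjI) auto
qed

context right_mod_quot begin

lemma quot_generates: "generates R M n s \<Longrightarrow> generates R Q n (\<lambda>i. K +>\<^bsub>M\<^esub> s i)"
  unfolding generates_def
proof (intro conjI ballI)
  assume gen: "(\<forall>i<n. s i \<in> carrier M) \<and>
    (\<forall>x\<in>carrier M. \<exists>c. (\<forall>i<n. c i \<in> carrier R) \<and> x = lincomb M c s n)"
  then show "\<forall>i<n. K +>\<^bsub>M\<^esub> s i \<in> carrier Q" by simp
  fix A assume "A \<in> carrier Q"
  then obtain x where x: "x \<in> carrier M" "A = K +>\<^bsub>M\<^esub> x" by (auto simp: quot_carrier)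
  obtain c where c: "\<forall>i<n. c i \<in> carrier R" "x = lincomb M c s n" using gen x by blast
  have "A = K +>\<^bsub>M\<^esub> lincomb M c s n" using x(2) c(2) by (simp only:)
  also have "\<dots> = finsum Q (\<lambda>i. K +>\<^bsub>M\<^esub> smult M (c i) (s i)) {..<n}"
    by (rule quot_map.hom_finsum) (use c gen in auto)
  also have "\<dots> = lincomb Q c (\<lambda>i. K +>\<^bsub>M\<^esub> s i) n"
    by (rule Q.M.finsum_cong') (use c gen in \<open>auto simp: quot_smult\<close>)
  finally show "\<exists>c. (\<forall>i<n. c i \<in> carrier R) \<and> A = lincomb Q c (\<lambda>i. K +>\<^bsub>M\<^esub> s i) n"
    using c(1) by blast
qed

lemma quot_fin_gen: "fin_gen R M \<Longrightarrow> fin_gen R Q"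
  by (erule generates_if_fin_gen) (rule Q.fin_gen_if_generates, erule quot_generates)

end

section \<open>Projectivity from dual bases\<close>

definition free_eval :: "'a ring \<Rightarrow> ('a, 'm) module \<Rightarrow> ('m \<Rightarrow> 'a) \<Rightarrow> 'm" where
  "free_eval R M \<phi> = finsum M (\<lambda>p. smult M (\<phi> p) p) {p. \<phi> p \<noteq> \<zero>\<^bsub>R\<^esub>}"

context right_mod begin

abbreviation F where "F \<equiv> free_mod R (carrier M)"

lemma free_mod_support:
  assumes "\<phi> \<in> carrier F"
  shows "finite {p. \<phi> p \<noteq> \<zero>\<^bsub>R\<^esub>}" "{p. \<phi> p \<noteq> \<zero>\<^bsub>R\<^esub>} \<subseteq> carrier M"
  using assms by (auto simp: free_mod_carrier)

lemma free_eval_eq: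
  assumes \<phi>: "\<phi> \<in> carrier F" and T: "finite T" "{p. \<phi> p \<noteq> \<zero>\<^bsub>R\<^esub>} \<subseteq> T" "T \<subseteq> carrier M"
  shows "free_eval R M \<phi> = finsum M (\<lambda>p. smult M (\<phi> p) p) T"
  unfolding free_eval_def
  by (rule M.add.finprod_mono_neutral_cong_left)
     (use T free_mod_entry_closed[OF R.ring_axioms \<phi>] in auto)

lemma free_eval_closed:
  assumes \<phi>: "\<phi> \<in> carrier F" shows "free_eval R M \<phi> \<in> carrier M"
  unfolding free_eval_def
  using free_mod_support(2)[OF \<phi>] free_mod_entry_closed[OF R.ring_axioms \<phi>]
  by (intro M.finsum_closed) auto

lemma free_eval_hom: "module_hom R F M (free_eval R M)"
  unfolding module_hom_def
proof (intro conjI ballI)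
  interpret F: right_mod R F by (intro right_modI free_mod_right_module R.ring_axioms)
  note entry = free_mod_entry_closed[OF R.ring_axioms]
  fix \<phi> \<psi> assume \<phi>: "\<phi> \<in> carrier F" and \<psi>: "\<psi> \<in> carrier F"
  let ?T = "{p. \<phi> p \<noteq> \<zero>\<^bsub>R\<^esub>} \<union> {p. \<psi> p \<noteq> \<zero>\<^bsub>R\<^esub>}"
  have T: "finite ?T" "?T \<subseteq> carrier M" using free_mod_support[OF \<phi>] free_mod_support[OF \<psi>] by auto
  have supp: "{p. (\<phi> \<oplus>\<^bsub>F\<^esub> \<psi>) p \<noteq> \<zero>\<^bsub>R\<^esub>} \<subseteq> ?T" using entry[OF \<phi>] entry[OF \<psi>] by auto
  have "free_eval R M (\<phi> \<oplus>\<^bsub>F\<^esub> \<psi>) = finsum M (\<lambda>p. smult M (\<phi> p \<oplus>\<^bsub>R\<^esub> \<psi> p) p) ?T"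
    using free_eval_eq[OF F.M.a_closed[OF \<phi> \<psi>] T(1) supp T(2)] by simp
  also have "\<dots> = finsum M (\<lambda>p. smult M (\<phi> p) p \<oplus>\<^bsub>M\<^esub> smult M (\<psi> p) p) ?T"
    by (rule M.finsum_cong') (use T entry[OF \<phi>] entry[OF \<psi>] in \<open>auto simp: smult_add_left\<close>)
  also have "\<dots> = finsum M (\<lambda>p. smult M (\<phi> p) p) ?T \<oplus>\<^bsub>M\<^esub> finsum M (\<lambda>p. smult M (\<psi> p) p) ?T"
    by (rule M.finsum_addf) (use T entry[OF \<phi>] entry[OF \<psi>] in auto)
  also have "\<dots> = free_eval R M \<phi> \<oplus>\<^bsub>M\<^esub> free_eval R M \<psi>"
    using free_eval_eq[OF \<phi> T(1) Un_upper1 T(2)] free_eval_eq[OF \<psi> T(1) Un_upper2 T(2)] by simp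
  finally show "free_eval R M (\<phi> \<oplus>\<^bsub>F\<^esub> \<psi>) = free_eval R M \<phi> \<oplus>\<^bsub>M\<^esub> free_eval R M \<psi>" .
next
  interpret F: right_mod R F by (intro right_modI free_mod_right_module R.ring_axioms)
  note entry = free_mod_entry_closed[OF R.ring_axioms]
  fix \<phi> r assume \<phi>: "\<phi> \<in> carrier F" and r: "r \<in> carrier R"
  note T = free_mod_support[OF \<phi>]
  have supp: "{p. (smult F r \<phi>) p \<noteq> \<zero>\<^bsub>R\<^esub>} \<subseteq> {p. \<phi> p \<noteq> \<zero>\<^bsub>R\<^esub>}" using entry[OF \<phi>] r by auto
  have "free_eval R M (smult F r \<phi>) = finsum M (\<lambda>p. smult M (\<phi> p \<otimes>\<^bsub>R\<^esub> r) p) {p. \<phi> p \<noteq> \<zero>\<^bsub>R\<^esub>}"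
    using free_eval_eq[OF F.smult_closed[OF r \<phi>] T(1) supp T(2)] by simp
  also have "\<dots> = finsum M (\<lambda>p. smult M r (smult M (\<phi> p) p)) {p. \<phi> p \<noteq> \<zero>\<^bsub>R\<^esub>}"
    by (rule M.finsum_cong') (use T entry[OF \<phi>] r in \<open>auto simp: smult_mult\<close>)
  also have "\<dots> = smult M r (free_eval R M \<phi>)"
    unfolding free_eval_def by (rule smult_finsum_right[symmetric]) (use T entry[OF \<phi>] r in auto)
  finally show "free_eval R M (smult F r \<phi>) = smult M r (free_eval R M \<phi>)" .
qed (rule free_eval_closed)

text \<open>A section of the evaluation map exhibits M as a direct summand of the free module on its own
  underlying set, which is exactly how projectivity is defined here.\<close>

lemma projective_if_section_of_free_eval:
  assumes \<sigma>: "module_hom R M F \<sigma>" and retract: "\<And>x. x \<in> carrier M \<Longrightarrow> free_eval R M (\<sigma> x) = x"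
  shows "projective R M"
  unfolding projective_def
proof (intro exI conjI)
  interpret \<sigma>: right_mod_hom R M F \<sigma>
    by (intro right_mod_homI right_module free_mod_right_module R.ring_axioms \<sigma>)
  interpret \<pi>: right_mod_hom R F M "free_eval R M"
    by (intro right_mod_homI right_module free_mod_right_module R.ring_axioms free_eval_hom)
  let ?L = "{\<phi> \<in> carrier F. free_eval R M \<phi> = \<zero>\<^bsub>M\<^esub>}"
  show "module_hom R M F \<sigma>" by (rule \<sigma>)
  show "inj_on \<sigma> (carrier M)" by (rule inj_on_inverseI[where g = "free_eval R M"]) (rule retract)
  have "\<sigma> ` carrier M \<inter> ?L = {\<zero>\<^bsub>F\<^esub>}"
  proof
    show "\<sigma> ` carrier M \<inter> ?L \<subseteq> {\<zero>\<^bsub>F\<^esub>}"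
    proof
      fix \<phi> assume "\<phi> \<in> \<sigma> ` carrier M \<inter> ?L"
      then obtain x where "x \<in> carrier M" "\<phi> = \<sigma> x" "free_eval R M (\<sigma> x) = \<zero>\<^bsub>M\<^esub>" by auto
      then show "\<phi> \<in> {\<zero>\<^bsub>F\<^esub>}" using retract by simp
    qed
    have "\<zero>\<^bsub>F\<^esub> \<in> \<sigma> ` carrier M" using \<sigma>.hom_zero M.zero_closed by (metis image_eqI)
    then show "{\<zero>\<^bsub>F\<^esub>} \<subseteq> \<sigma> ` carrier M \<inter> ?L" using \<pi>.hom_zero \<sigma>.N.M.zero_closed by simp
  qed
  moreover have "\<exists>k\<in>\<sigma> ` carrier M. \<exists>l\<in>?L. \<phi> = k \<oplus>\<^bsub>F\<^esub> l" if \<phi>: "\<phi> \<in> carrier F" for \<phi>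
  proof (intro bexI)
    let ?k = "\<sigma> (free_eval R M \<phi>)"
    have k: "?k \<in> carrier F" using \<phi> by simp
    show "\<phi> = ?k \<oplus>\<^bsub>F\<^esub> (\<phi> \<ominus>\<^bsub>F\<^esub> ?k)"
      unfolding \<sigma>.N.M.minus_eq using \<phi> k
      by (metis \<sigma>.N.M.add.m_lcomm \<sigma>.N.M.a_inv_closed \<sigma>.N.M.r_neg \<sigma>.N.M.r_zero)
    show "\<phi> \<ominus>\<^bsub>F\<^esub> ?k \<in> ?L"
      using \<pi>.hom_minus[OF \<phi> k] retract[OF \<pi>.hom_closed[OF \<phi>]] \<pi>.hom_closed[OF \<phi>] \<phi> k
      by (simp add: M.r_neg M.minus_eq)
    show "?k \<in> \<sigma> ` carrier M" using \<phi> by simp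
  qed
  ultimately show "direct_summand R F (\<sigma> ` carrier M)"
    unfolding direct_summand_def
    by (intro conjI \<sigma>.image_submodule exI[of _ ?L] \<pi>.kernel_submodule) auto
qed

context
  fixes n :: nat and xs :: "nat \<Rightarrow> 'm" and fs :: "nat \<Rightarrow> 'm \<Rightarrow> 'a"
  assumes xs: "\<forall>i<n. xs i \<in> carrier M"
    and fs: "\<forall>i<n. module_hom R M (RR R) (fs i)"
    and dual_basis: "\<forall>x\<in>carrier M. x = lincomb M (\<lambda>i. fs i x) xs n"
begin

private definition fibre where "fibre p = {i. i < n \<and> xs i = p}"

private definition \<sigma> where
  "\<sigma> x = (\<lambda>p. if p \<in> carrier M then finsum R (\<lambda>i. fs i x) (fibre p) else \<zero>\<^bsub>R\<^esub>)"

private lemma fs_closed: "i < n \<Longrightarrow> x \<in> carrier M \<Longrightarrow> fs i x \<in> carrier R"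
  using fs unfolding module_hom_def by auto

private lemma \<sigma>_support: "{p. \<sigma> x p \<noteq> \<zero>\<^bsub>R\<^esub>} \<subseteq> xs ` {..<n}"
proof
  fix p assume "p \<in> {p. \<sigma> x p \<noteq> \<zero>\<^bsub>R\<^esub>}"
  then have "fibre p \<noteq> {}" unfolding \<sigma>_def by (auto split: if_splits)
  then show "p \<in> xs ` {..<n}" unfolding fibre_def by auto
qed

private lemma \<sigma>_hom: "module_hom R M F \<sigma>"
  unfolding module_hom_def
proof (intro conjI ballI)
  fix x assume x: "x \<in> carrier M"
  have "finite {p. \<sigma> x p \<noteq> \<zero>\<^bsub>R\<^esub>}" using \<sigma>_support by (rule finite_subset) simp
  moreover have "\<forall>p\<in>carrier M. \<sigma> x p \<in> carrier R"
    unfolding \<sigma>_def fibre_def using x fs_closed by (auto intro!: R.finsum_closed)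
  ultimately show "\<sigma> x \<in> carrier F" by (auto simp: free_mod_carrier \<sigma>_def)
next
  fix x y assume x: "x \<in> carrier M" and y: "y \<in> carrier M"
  have "finsum R (\<lambda>i. fs i (x \<oplus>\<^bsub>M\<^esub> y)) (fibre p) = finsum R (\<lambda>i. fs i x) (fibre p) \<oplus>\<^bsub>R\<^esub> finsum R (\<lambda>i. fs i y) (fibre p)" for p
  proof -
    have "finsum R (\<lambda>i. fs i (x \<oplus>\<^bsub>M\<^esub> y)) (fibre p) = finsum R (\<lambda>i. fs i x \<oplus>\<^bsub>R\<^esub> fs i y) (fibre p)"
      by (rule R.finsum_cong') (use x y fs fs_closed in \<open>auto simp: fibre_def module_hom_def\<close>)
    also have "\<dots> = finsum R (\<lambda>i. fs i x) (fibre p) \<oplus>\<^bsub>R\<^esub> finsum R (\<lambda>i. fs i y) (fibre p)"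
      by (rule R.finsum_addf) (use x y fs_closed in \<open>auto simp: fibre_def\<close>)
    finally show ?thesis .
  qed
  then show "\<sigma> (x \<oplus>\<^bsub>M\<^esub> y) = \<sigma> x \<oplus>\<^bsub>F\<^esub> \<sigma> y" by (auto simp: \<sigma>_def)
next
  fix x r assume x: "x \<in> carrier M" and r: "r \<in> carrier R"
  have "finsum R (\<lambda>i. fs i (smult M r x)) (fibre p) = finsum R (\<lambda>i. fs i x) (fibre p) \<otimes>\<^bsub>R\<^esub> r" for p
  proof -
    have "finsum R (\<lambda>i. fs i (smult M r x)) (fibre p) = finsum R (\<lambda>i. fs i x \<otimes>\<^bsub>R\<^esub> r) (fibre p)"
      by (rule R.finsum_cong') (use x r fs fs_closed in \<open>auto simp: fibre_def module_hom_def\<close>)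
    also have "\<dots> = finsum R (\<lambda>i. fs i x) (fibre p) \<otimes>\<^bsub>R\<^esub> r"
      by (rule R.finsum_ldistr[symmetric]) (use x r fs_closed in \<open>auto simp: fibre_def\<close>)
    finally show ?thesis .
  qed
  then show "\<sigma> (smult M r x) = smult F r (\<sigma> x)" using r by (auto simp: \<sigma>_def)
qed

private lemma free_eval_\<sigma>:
  assumes x: "x \<in> carrier M" shows "free_eval R M (\<sigma> x) = x"
proof -
  let ?T = "xs ` {..<n}"
  have T: "finite ?T" "?T \<subseteq> carrier M" using xs by auto
  have \<sigma>x: "\<sigma> x \<in> carrier F" using \<sigma>_hom x unfolding module_hom_def by blast
  have "free_eval R M (\<sigma> x) = finsum M (\<lambda>p. smult M (\<sigma> x p) p) ?T"
    by (rule free_eval_eq[OF \<sigma>x T(1) \<sigma>_support T(2)])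
  also have "\<dots> = finsum M (\<lambda>p. finsum M (\<lambda>i. smult M (fs i x) (xs i)) (fibre p)) ?T"
  proof (rule M.finsum_cong')
    fix p assume p: "p \<in> ?T"
    then have "smult M (\<sigma> x p) p = finsum M (\<lambda>i. smult M (fs i x) p) (fibre p)"
      unfolding \<sigma>_def using T x fs_closed
      by (auto intro!: smult_finsum_left simp: fibre_def)
    also have "\<dots> = finsum M (\<lambda>i. smult M (fs i x) (xs i)) (fibre p)"
      by (rule M.finsum_cong') (use x xs fs_closed in \<open>auto simp: fibre_def\<close>)
    finally show "smult M (\<sigma> x p) p = finsum M (\<lambda>i. smult M (fs i x) (xs i)) (fibre p)" .
  qed (use x xs fs_closed in \<open>auto intro!: M.finsum_closed simp: fibre_def\<close>)
  also have "\<dots> = finsum M (\<lambda>i. smult M (fs i x) (xs i)) (\<Union>(fibre ` ?T))"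
    by (rule M.add.finprod_UN_disjoint[symmetric])
       (use x xs fs_closed in \<open>auto simp: fibre_def pairwise_def disjnt_def\<close>)
  also have "\<Union>(fibre ` ?T) = {..<n}" unfolding fibre_def by auto
  finally show ?thesis using dual_basis x by simp
qed

lemma dual_basis_projective: "projective R M"
  by (rule projective_if_section_of_free_eval[OF \<sigma>_hom free_eval_\<sigma>])

end

text \<open>In a projective module the forms separate points: M embeds into a free module, whose
  coordinate functionals are forms.\<close>

lemma projective_forms_separate_points:
  assumes proj: "projective R M" and x: "x \<in> carrier M"
    and forms: "\<And>f. module_hom R M (RR R) f \<Longrightarrow> f x = \<zero>\<^bsub>R\<^esub>"
  shows "x = \<zero>\<^bsub>M\<^esub>"
proof -
  obtain \<iota> where \<iota>: "module_hom R M F \<iota>" "inj_on \<iota> (carrier M)"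
    using proj unfolding projective_def by blast
  interpret \<iota>: right_mod_hom R M F \<iota> by (intro right_mod_homI right_module free_mod_right_module R.ring_axioms \<iota>(1))
  have coordinate: "module_hom R F (RR R) (\<lambda>\<phi>. \<phi> p)" for p
    unfolding module_hom_def by (auto simp: free_mod_entry_closed[OF R.ring_axioms])
  have "\<iota> x p = \<zero>\<^bsub>R\<^esub>" for p
    using forms[OF module_hom_comp[OF \<iota>(1) coordinate]] by simp
  then have "\<iota> x = \<iota> \<zero>\<^bsub>M\<^esub>" by auto
  then show ?thesis by (rule inj_onD[OF \<iota>(2) _ x M.zero_closed])
qed

end

section \<open>Splitting off the form closure\<close>

lemma (in abelian_monoid) finsum_swap:
  assumes "finite A" "finite B" "\<And>a b. a \<in> A \<Longrightarrow> b \<in> B \<Longrightarrow> f a b \<in> carrier G"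
  shows "finsum G (\<lambda>a. finsum G (\<lambda>b. f a b) B) A = finsum G (\<lambda>b. finsum G (\<lambda>a. f a b) A) B"
  using assms(1,3)
proof (induct A rule: finite_induct)
  case empty then show ?case using assms(2) by (simp add: finsum_zero)
next
  case (insert x A)
  have "finsum G (\<lambda>a. finsum G (\<lambda>b. f a b) B) (insert x A)
      = finsum G (\<lambda>b. f x b) B \<oplus> finsum G (\<lambda>b. finsum G (\<lambda>a. f a b) A) B"
    using insert assms(2) by (subst finsum_insert) (auto intro!: finsum_closed)
  also have "\<dots> = finsum G (\<lambda>b. f x b \<oplus> finsum G (\<lambda>a. f a b) A) B"
    using insert assms(2) by (subst finsum_addf) (auto intro!: finsum_closed)
  also have "\<dots> = finsum G (\<lambda>b. finsum G (\<lambda>a. f a b) (insert x A)) B"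
    by (rule finsum_cong') (use insert in \<open>auto intro!: finsum_closed\<close>)
  finally show ?case .
qed

lemma (in ring) finsum_mult_assoc:
  assumes "finite A" "finite B" "\<And>a. a \<in> A \<Longrightarrow> x a \<in> carrier R"
    "\<And>a b. a \<in> A \<Longrightarrow> b \<in> B \<Longrightarrow> y a b \<in> carrier R" "\<And>b. b \<in> B \<Longrightarrow> z b \<in> carrier R"
  shows "finsum R (\<lambda>a. x a \<otimes> finsum R (\<lambda>b. y a b \<otimes> z b) B) A
       = finsum R (\<lambda>b. finsum R (\<lambda>a. x a \<otimes> y a b) A \<otimes> z b) B"
proof -
  have "finsum R (\<lambda>a. x a \<otimes> finsum R (\<lambda>b. y a b \<otimes> z b) B) A
      = finsum R (\<lambda>a. finsum R (\<lambda>b. x a \<otimes> y a b \<otimes> z b) B) A"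
    by (rule finsum_cong')
       (use assms in \<open>auto simp: finsum_rdistr m_assoc intro!: finsum_closed finsum_cong'\<close>)
  also have "\<dots> = finsum R (\<lambda>b. finsum R (\<lambda>a. x a \<otimes> y a b \<otimes> z b) A) B"
    by (rule finsum_swap) (use assms in auto)
  also have "\<dots> = finsum R (\<lambda>b. finsum R (\<lambda>a. x a \<otimes> y a b) A \<otimes> z b) B"
    by (rule finsum_cong') (use assms in \<open>auto simp: finsum_ldistr intro!: finsum_closed\<close>)
  finally show ?thesis .
qed

lemma matring_simps:
  "carrier (matring R n) = {A. \<forall>i j. (i < n \<and> j < n \<longrightarrow> A i j \<in> carrier R) \<and>
                                     (\<not> (i < n \<and> j < n) \<longrightarrow> A i j = \<zero>\<^bsub>R\<^esub>)}"
  "mult (matring R n) A B = (\<lambda>i j. if i < n \<and> j < n then (\<Oplus>\<^bsub>R\<^esub> k\<in>{..<n}. A i k \<otimes>\<^bsub>R\<^esub> B k j) else \<zero>\<^bsub>R\<^esub>)"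
  "zero (matring R n) = (\<lambda>i j. \<zero>\<^bsub>R\<^esub>)"
  by (simp_all add: matring_def)

lemma matring_idempotent_fixes_range:
  assumes R: "ring R" and e: "e \<in> carrier (matring R n)" "e \<otimes>\<^bsub>matring R n\<^esub> e = e"
    and Y: "Y \<in> carrier (matring R n)" and i: "i < n" and j: "j < n"
  shows "finsum R (\<lambda>k. e i k \<otimes>\<^bsub>R\<^esub> (e \<otimes>\<^bsub>matring R n\<^esub> Y) k j) {..<n} = (e \<otimes>\<^bsub>matring R n\<^esub> Y) i j"
proof -
  interpret R: ring R by (rule R)
  have e_closed: "\<forall>i<n. \<forall>j<n. e i j \<in> carrier R" and Y_closed: "\<forall>l<n. Y l j \<in> carrier R"
    using e(1) Y j by (simp_all add: matring_simps)
  have "finsum R (\<lambda>k. e i k \<otimes>\<^bsub>R\<^esub> (e \<otimes>\<^bsub>matring R n\<^esub> Y) k j) {..<n}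
      = finsum R (\<lambda>k. e i k \<otimes>\<^bsub>R\<^esub> finsum R (\<lambda>l. e k l \<otimes>\<^bsub>R\<^esub> Y l j) {..<n}) {..<n}"
    by (rule R.finsum_cong') (use e_closed Y_closed i j in \<open>auto simp: matring_simps intro!: R.finsum_closed\<close>)
  also have "\<dots> = finsum R (\<lambda>l. finsum R (\<lambda>k. e i k \<otimes>\<^bsub>R\<^esub> e k l) {..<n} \<otimes>\<^bsub>R\<^esub> Y l j) {..<n}"
    by (rule R.finsum_mult_assoc) (use e_closed Y_closed i in auto)
  also have "\<dots> = finsum R (\<lambda>l. e i l \<otimes>\<^bsub>R\<^esub> Y l j) {..<n}"
  proof (rule R.finsum_cong')
    fix l assume "l \<in> {..<n}"
    then show "finsum R (\<lambda>k. e i k \<otimes>\<^bsub>R\<^esub> e k l) {..<n} \<otimes>\<^bsub>R\<^esub> Y l j = e i l \<otimes>\<^bsub>R\<^esub> Y l j"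
      using fun_cong[OF fun_cong[OF e(2)], of i l] i by (simp add: matring_simps)
  qed (use e_closed Y_closed i in auto)
  also have "\<dots> = (e \<otimes>\<^bsub>matring R n\<^esub> Y) i j" using i j by (simp add: matring_simps)
  finally show ?thesis .
qed

lemma matring_idempotent_fixes_annihilated_columns:
  assumes R: "ring R" and e: "e \<in> carrier (matring R n)" "e \<otimes>\<^bsub>matring R n\<^esub> e = e"
    and ann: "\<And>X. X \<in> carrier (matring R n) \<Longrightarrow>
                \<forall>v\<in>V. \<forall>j<n. finsum R (\<lambda>k. v k \<otimes>\<^bsub>R\<^esub> X k j) {..<n} = \<zero>\<^bsub>R\<^esub> \<Longrightarrow>
                \<exists>Y\<in>carrier (matring R n). X = e \<otimes>\<^bsub>matring R n\<^esub> Y"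
    and V: "\<forall>v\<in>V. \<forall>k<n. v k \<in> carrier R"
    and c: "\<forall>k<n. c k \<in> carrier R" and c_ann: "\<forall>v\<in>V. finsum R (\<lambda>k. v k \<otimes>\<^bsub>R\<^esub> c k) {..<n} = \<zero>\<^bsub>R\<^esub>"
  shows "\<forall>i<n. finsum R (\<lambda>k. e i k \<otimes>\<^bsub>R\<^esub> c k) {..<n} = c i"
proof (intro allI impI)
  interpret R: ring R by (rule R)
  define X where "X = (\<lambda>i (j::nat). if i < n \<and> j = 0 then c i else \<zero>\<^bsub>R\<^esub>)"
  have X: "X \<in> carrier (matring R n)" using c by (auto simp: X_def matring_simps)
  have "finsum R (\<lambda>k. v k \<otimes>\<^bsub>R\<^esub> X k j) {..<n} = \<zero>\<^bsub>R\<^esub>" if v: "v \<in> V" for v j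
  proof -
    have "finsum R (\<lambda>k. v k \<otimes>\<^bsub>R\<^esub> X k j) {..<n}
        = finsum R (\<lambda>k. if j = 0 then v k \<otimes>\<^bsub>R\<^esub> c k else \<zero>\<^bsub>R\<^esub>) {..<n}"
      by (rule R.finsum_cong') (use c v V in \<open>auto simp: X_def\<close>)
    also have "\<dots> = \<zero>\<^bsub>R\<^esub>" using c_ann v by (cases "j = 0") auto
    finally show ?thesis .
  qed
  then obtain Y where Y: "Y \<in> carrier (matring R n)" "X = e \<otimes>\<^bsub>matring R n\<^esub> Y" using ann[OF X] by blast
  fix i assume i: "i < n"
  have "finsum R (\<lambda>k. e i k \<otimes>\<^bsub>R\<^esub> c k) {..<n} = finsum R (\<lambda>k. e i k \<otimes>\<^bsub>R\<^esub> X k 0) {..<n}"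
    by (rule R.finsum_cong') (use c e(1) i in \<open>auto simp: X_def matring_simps\<close>)
  also have "\<dots> = X i 0"
    using matring_idempotent_fixes_range[OF R e Y(1) i, of 0] i Y(2) by simp
  finally show "finsum R (\<lambda>k. e i k \<otimes>\<^bsub>R\<^esub> c k) {..<n} = c i" using i by (simp add: X_def)
qed

text \<open>In a Baer matrix ring the right annihilator of a set of rows is generated by an idempotent;
  read on column vectors, this is the following statement.\<close>

lemma baer_matring_annihilator_idempotent:
  assumes R: "ring R" and baer: "baer_ring (matring R n)"
    and V: "\<forall>v\<in>V. \<forall>k<n. v k \<in> carrier R"
  obtains e where "\<forall>i<n. \<forall>j<n. e i j \<in> carrier R"
    and "\<forall>v\<in>V. \<forall>j<n. finsum R (\<lambda>k. v k \<otimes>\<^bsub>R\<^esub> e k j) {..<n} = \<zero>\<^bsub>R\<^esub>"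
    and "\<And>c. \<forall>k<n. c k \<in> carrier R \<Longrightarrow> \<forall>v\<in>V. finsum R (\<lambda>k. v k \<otimes>\<^bsub>R\<^esub> c k) {..<n} = \<zero>\<^bsub>R\<^esub> \<Longrightarrow>
           \<forall>i<n. finsum R (\<lambda>k. e i k \<otimes>\<^bsub>R\<^esub> c k) {..<n} = c i"
proof -
  interpret R: ring R by (rule R)
  let ?A = "matring R n"
  define row where "row v = (\<lambda>i j. if i < n \<and> j < n then v j else \<zero>\<^bsub>R\<^esub>)" for v :: "nat \<Rightarrow> 'a"
  have rows: "row ` V \<subseteq> carrier ?A" using V by (auto simp: row_def matring_simps)
  obtain e where e: "e \<in> carrier ?A" "e \<otimes>\<^bsub>?A\<^esub> e = e"
    and ann: "{X \<in> carrier ?A. \<forall>t\<in>row ` V. t \<otimes>\<^bsub>?A\<^esub> X = \<zero>\<^bsub>?A\<^esub>} = {e \<otimes>\<^bsub>?A\<^esub> Y | Y. Y \<in> carrier ?A}"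
    using baer[unfolded baer_ring_def, rule_format, OF rows] by (elim bexE conjE)
  have row_mult: "(row v \<otimes>\<^bsub>?A\<^esub> X) i j = finsum R (\<lambda>k. v k \<otimes>\<^bsub>R\<^esub> X k j) {..<n}"
    if "v \<in> V" "X \<in> carrier ?A" "i < n" "j < n" for v X i j
    using that(3,4) unfolding matring_simps(2) row_def
    by (simp, intro R.finsum_cong') (use that V in \<open>auto simp: matring_simps\<close>)
  have e_ann: "row v \<otimes>\<^bsub>?A\<^esub> e = \<zero>\<^bsub>?A\<^esub>" if "v \<in> V" for v
  proof -
    have "e \<in> {X \<in> carrier ?A. \<forall>t\<in>row ` V. t \<otimes>\<^bsub>?A\<^esub> X = \<zero>\<^bsub>?A\<^esub>}" unfolding ann using e by force
    then show ?thesis using that by blast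
  qed
  have e_ann_fixes: "\<exists>Y\<in>carrier ?A. X = e \<otimes>\<^bsub>?A\<^esub> Y"
    if X: "X \<in> carrier ?A" and X_ann: "\<forall>v\<in>V. \<forall>j<n. finsum R (\<lambda>k. v k \<otimes>\<^bsub>R\<^esub> X k j) {..<n} = \<zero>\<^bsub>R\<^esub>" for X
  proof -
    have "row v \<otimes>\<^bsub>?A\<^esub> X = \<zero>\<^bsub>?A\<^esub>" if v: "v \<in> V" for v
      using row_mult[OF v X] X_ann v by (intro ext) (auto simp: matring_simps)
    then show ?thesis using X ann by blast
  qed
  show ?thesis
  proof (rule that)
    show "\<forall>i<n. \<forall>j<n. e i j \<in> carrier R" using e(1) by (simp add: matring_simps)
    show "\<forall>v\<in>V. \<forall>j<n. finsum R (\<lambda>k. v k \<otimes>\<^bsub>R\<^esub> e k j) {..<n} = \<zero>\<^bsub>R\<^esub>"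
    proof (intro ballI allI impI)
      fix v j assume v: "v \<in> V" and j: "j < n"
      show "finsum R (\<lambda>k. v k \<otimes>\<^bsub>R\<^esub> e k j) {..<n} = \<zero>\<^bsub>R\<^esub>"
        using row_mult[OF v e(1) _ j, of 0] fun_cong[OF fun_cong[OF e_ann[OF v]], of 0 j] j
        by (simp add: matring_simps)
    qed
  qed (rule matring_idempotent_fixes_annihilated_columns[OF R e e_ann_fixes V])
qed

definition vanishing_forms :: "'a ring \<Rightarrow> ('a, 'm) module \<Rightarrow> 'm set \<Rightarrow> ('m \<Rightarrow> 'a) set" where
  "vanishing_forms R M K = {f. module_hom R M (RR R) f \<and> (\<forall>k\<in>K. f k = \<zero>\<^bsub>R\<^esub>)}"

definition form_closure :: "'a ring \<Rightarrow> ('a, 'm) module \<Rightarrow> 'm set \<Rightarrow> 'm set" where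
  "form_closure R M K = {x \<in> carrier M. \<forall>f\<in>vanishing_forms R M K. f x = \<zero>\<^bsub>R\<^esub>}"

lemma finsum_RR [simp]: "finsum (RR R) f A = finsum R f A"
  by (simp add: finsum_def finprod_def RR_def)

context right_mod begin

lemma vanishing_form_hom: "f \<in> vanishing_forms R M K \<Longrightarrow> right_mod_hom R M (RR R) f"
  unfolding vanishing_forms_def by (intro right_mod_homI right_module RR_right_module R.ring_axioms) auto

lemma vanishing_form_closed: "f \<in> vanishing_forms R M K \<Longrightarrow> x \<in> carrier M \<Longrightarrow> f x \<in> carrier R"
  using right_mod_hom.hom_closed[OF vanishing_form_hom] by fastforce

lemma submodule_Inter:
  assumes "\<And>j. j \<in> J \<Longrightarrow> submodule R M (S j)"
  shows "submodule R M {x \<in> carrier M. \<forall>j\<in>J. x \<in> S j}"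
  unfolding submodule_def
proof (intro conjI ballI)
  fix x y assume "x \<in> {x \<in> carrier M. \<forall>j\<in>J. x \<in> S j}" "y \<in> {x \<in> carrier M. \<forall>j\<in>J. x \<in> S j}"
  then show "x \<oplus>\<^bsub>M\<^esub> y \<in> {x \<in> carrier M. \<forall>j\<in>J. x \<in> S j}"
    using assms unfolding submodule_def by simp
next
  fix x assume "x \<in> {x \<in> carrier M. \<forall>j\<in>J. x \<in> S j}"
  then show "\<ominus>\<^bsub>M\<^esub> x \<in> {x \<in> carrier M. \<forall>j\<in>J. x \<in> S j}"
    using assms unfolding submodule_def by simp
next
  fix x r assume "x \<in> {x \<in> carrier M. \<forall>j\<in>J. x \<in> S j}" "r \<in> carrier R"
  then show "smult M r x \<in> {x \<in> carrier M. \<forall>j\<in>J. x \<in> S j}"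
    using assms unfolding submodule_def by simp
qed (use assms in \<open>auto simp: submodule_def\<close>)

lemma form_closure_submodule: "submodule R M (form_closure R M K)"
proof -
  have "submodule R M {x \<in> carrier M. f x = \<zero>\<^bsub>R\<^esub>}" if "f \<in> vanishing_forms R M K" for f
    using right_mod_hom.kernel_submodule[OF vanishing_form_hom[OF that]] by simp
  then have "submodule R M {x \<in> carrier M. \<forall>f\<in>vanishing_forms R M K. x \<in> {x \<in> carrier M. f x = \<zero>\<^bsub>R\<^esub>}}"
    by (rule submodule_Inter)
  moreover have "{x \<in> carrier M. \<forall>f\<in>vanishing_forms R M K. x \<in> {x \<in> carrier M. f x = \<zero>\<^bsub>R\<^esub>}}
      = form_closure R M K"
    unfolding form_closure_def by auto
  ultimately show ?thesis by simp
qed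

lemma subset_form_closure: "K \<subseteq> carrier M \<Longrightarrow> K \<subseteq> form_closure R M K"
  unfolding form_closure_def vanishing_forms_def by auto

lemma form_closure_zero:
  "form_closure R M {\<zero>\<^bsub>M\<^esub>} = {x \<in> carrier M. \<forall>f. module_hom R M (RR R) f \<longrightarrow> f x = \<zero>\<^bsub>R\<^esub>}"
proof -
  have "f \<zero>\<^bsub>M\<^esub> = \<zero>\<^bsub>R\<^esub>" if "module_hom R M (RR R) f" for f
    using right_mod_hom.hom_zero[OF right_mod_homI[OF right_module RR_right_module[OF R.ring_axioms] that]]
    by simp
  then show ?thesis unfolding form_closure_def vanishing_forms_def by auto
qed

end

text \<open>The data extracted from the Baer property: for generators s of M, an n \<times> n matrix e over R
  whose columns are annihilated by the rows (f (s 0), \<dots>, f (s (n-1))) of all forms f vanishing on K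
  and which fixes every column vector so annihilated.\<close>

locale form_coordinates = right_mod R M for R :: "'a ring" and M :: "('a, 'm) module" +
  fixes K :: "'m set" and n :: nat and s :: "nat \<Rightarrow> 'm" and e :: "nat \<Rightarrow> nat \<Rightarrow> 'a"
  assumes submodule_K: "submodule R M K"
    and generates: "generates R M n s"
    and e_closed: "\<forall>i<n. \<forall>j<n. e i j \<in> carrier R"
    and e_kills_forms:
      "\<forall>f\<in>vanishing_forms R M K. \<forall>j<n. finsum R (\<lambda>k. f (s k) \<otimes>\<^bsub>R\<^esub> e k j) {..<n} = \<zero>\<^bsub>R\<^esub>"
    and e_fixes:
      "\<And>c. \<forall>k<n. c k \<in> carrier R \<Longrightarrow>
        \<forall>f\<in>vanishing_forms R M K. finsum R (\<lambda>k. f (s k) \<otimes>\<^bsub>R\<^esub> c k) {..<n} = \<zero>\<^bsub>R\<^esub> \<Longrightarrow>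
        \<forall>i<n. finsum R (\<lambda>k. e i k \<otimes>\<^bsub>R\<^esub> c k) {..<n} = c i"
begin

abbreviation H where "H \<equiv> vanishing_forms R M K"
abbreviation C where "C \<equiv> form_closure R M K"

definition vec :: "(nat \<Rightarrow> 'a) \<Rightarrow> bool" where "vec c \<longleftrightarrow> (\<forall>i<n. c i \<in> carrier R)"

definition e_mult :: "(nat \<Rightarrow> 'a) \<Rightarrow> nat \<Rightarrow> 'a" where
  "e_mult c = (\<lambda>i. finsum R (\<lambda>k. e i k \<otimes>\<^bsub>R\<^esub> c k) {..<n})"

lemma s_closed: "\<forall>i<n. s i \<in> carrier M"
  using generates by (simp add: generates_def)

lemma lincomb_s_closed: "vec c \<Longrightarrow> lincomb M c s n \<in> carrier M"
  using s_closed by (simp add: vec_def lincomb_closed)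

lemma e_mult_vec: "vec c \<Longrightarrow> vec (e_mult c)"
  unfolding vec_def e_mult_def using e_closed by (auto intro!: R.finsum_closed)

lemma form_lincomb:
  assumes f: "f \<in> H" and c: "vec c"
  shows "f (lincomb M c s n) = finsum R (\<lambda>k. f (s k) \<otimes>\<^bsub>R\<^esub> c k) {..<n}"
proof -
  interpret f: right_mod_hom R M "RR R" f by (rule vanishing_form_hom[OF f])
  have "f (lincomb M c s n) = finsum R (\<lambda>k. f (smult M (c k) (s k))) {..<n}"
    using f.hom_finsum[of "{..<n}"] s_closed c by (simp add: vec_def)
  also have "\<dots> = finsum R (\<lambda>k. f (s k) \<otimes>\<^bsub>R\<^esub> c k) {..<n}"
    by (rule R.finsum_cong') (use s_closed c vanishing_form_closed[OF f] in \<open>auto simp: vec_def f.hom_smult\<close>)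
  finally show ?thesis .
qed

lemma lincomb_in_closure_iff:
  "vec c \<Longrightarrow> lincomb M c s n \<in> C \<longleftrightarrow> (\<forall>f\<in>H. finsum R (\<lambda>k. f (s k) \<otimes>\<^bsub>R\<^esub> c k) {..<n} = \<zero>\<^bsub>R\<^esub>)"
  unfolding form_closure_def using lincomb_s_closed form_lincomb by auto

lemma lincomb_e_mult_in_closure:
  assumes c: "vec c" shows "lincomb M (e_mult c) s n \<in> C"
proof -
  have "finsum R (\<lambda>k. f (s k) \<otimes>\<^bsub>R\<^esub> e_mult c k) {..<n} = \<zero>\<^bsub>R\<^esub>" if f: "f \<in> H" for f
  proof -
    have "finsum R (\<lambda>k. f (s k) \<otimes>\<^bsub>R\<^esub> e_mult c k) {..<n}
        = finsum R (\<lambda>l. finsum R (\<lambda>k. f (s k) \<otimes>\<^bsub>R\<^esub> e k l) {..<n} \<otimes>\<^bsub>R\<^esub> c l) {..<n}"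
      unfolding e_mult_def
      by (rule R.finsum_mult_assoc) (use c f s_closed e_closed vanishing_form_closed in \<open>auto simp: vec_def\<close>)
    also have "\<dots> = finsum R (\<lambda>l. \<zero>\<^bsub>R\<^esub>) {..<n}"
      by (rule R.finsum_cong') (use c f e_kills_forms in \<open>auto simp: vec_def\<close>)
    finally show ?thesis by simp
  qed
  then show ?thesis using lincomb_in_closure_iff[OF e_mult_vec[OF c]] by simp
qed

lemma e_mult_fixes: "vec c \<Longrightarrow> lincomb M c s n \<in> C \<Longrightarrow> i < n \<Longrightarrow> e_mult c i = c i"
  using e_fixes lincomb_in_closure_iff by (simp add: vec_def e_mult_def)

text \<open>In RR R, where r acts by right multiplication, (e c) i is the linear combination of the e i k
  with coefficients c k; this gives the linearity of e_mult.\<close>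

lemma e_mult_eq_lincomb: "e_mult c i = lincomb (RR R) c (e i) n"
  by (simp add: e_mult_def)

lemma e_mult_minus:
  assumes "vec c" "vec d" "i < n"
  shows "e_mult (\<lambda>k. c k \<ominus>\<^bsub>R\<^esub> d k) i = e_mult c i \<ominus>\<^bsub>R\<^esub> e_mult d i"
proof -
  interpret RR: right_mod R "RR R" by (intro right_modI RR_right_module R.ring_axioms)
  show ?thesis
    using RR.lincomb_minus[of n c d "e i"] assms e_closed RR_a_inv[OF R.ring_axioms]
    by (simp add: e_mult_eq_lincomb vec_def a_minus_def RR.lincomb_closed)
qed

lemma e_mult_add:
  assumes "vec c" "vec d" "i < n"
  shows "e_mult (\<lambda>k. c k \<oplus>\<^bsub>R\<^esub> d k) i = e_mult c i \<oplus>\<^bsub>R\<^esub> e_mult d i"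
proof -
  interpret RR: right_mod R "RR R" by (intro right_modI RR_right_module R.ring_axioms)
  show ?thesis
    using RR.lincomb_add[of n c d "e i"] assms e_closed by (simp add: e_mult_eq_lincomb vec_def)
qed

lemma e_mult_smult:
  assumes "vec c" "r \<in> carrier R" "i < n"
  shows "e_mult (\<lambda>k. c k \<otimes>\<^bsub>R\<^esub> r) i = e_mult c i \<otimes>\<^bsub>R\<^esub> r"
proof -
  interpret RR: right_mod R "RR R" by (intro right_modI RR_right_module R.ring_axioms)
  show ?thesis
    using RR.lincomb_smult[of n c r "e i"] assms e_closed by (simp add: e_mult_eq_lincomb vec_def)
qed

definition rep :: "'m \<Rightarrow> nat \<Rightarrow> 'a" where "rep x = (SOME c. vec c \<and> x = lincomb M c s n)"

text \<open>coord i does not depend on the choice of rep: two representations of the same element differ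
  by a vector that e fixes.\<close>

definition coord :: "nat \<Rightarrow> 'm \<Rightarrow> 'a" where "coord i x = rep x i \<ominus>\<^bsub>R\<^esub> e_mult (rep x) i"

lemma rep_lincomb:
  assumes x: "x \<in> carrier M" shows "vec (rep x) \<and> x = lincomb M (rep x) s n"
proof -
  have "\<exists>c. vec c \<and> x = lincomb M c s n"
    using bspec[OF conjunct2[OF generates[unfolded generates_def]] x] unfolding vec_def .
  then show ?thesis unfolding rep_def by (rule someI_ex)
qed

lemma coord_lincomb:
  assumes c: "vec c" and i: "i < n"
  shows "coord i (lincomb M c s n) = c i \<ominus>\<^bsub>R\<^esub> e_mult c i"
proof -
  define d where "d = rep (lincomb M c s n)"
  have d: "vec d" "lincomb M c s n = lincomb M d s n" using rep_lincomb[OF lincomb_s_closed[OF c]] by (auto simp: d_def)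
  have cd: "vec (\<lambda>k. c k \<ominus>\<^bsub>R\<^esub> d k)" using c d(1) by (auto simp: vec_def)
  have "lincomb M (\<lambda>k. c k \<ominus>\<^bsub>R\<^esub> d k) s n = \<zero>\<^bsub>M\<^esub>"
    using lincomb_minus[of n c d s] c d s_closed lincomb_s_closed[OF c] by (simp add: vec_def M.r_neg M.minus_eq)
  then have "e_mult (\<lambda>k. c k \<ominus>\<^bsub>R\<^esub> d k) i = c i \<ominus>\<^bsub>R\<^esub> d i"
    using e_mult_fixes[OF cd _ i] form_closure_submodule by (simp add: submodule_def)
  then have h: "e_mult c i \<ominus>\<^bsub>R\<^esub> e_mult d i = c i \<ominus>\<^bsub>R\<^esub> d i" using e_mult_minus[OF c d(1) i] by simp
  have cc: "c i \<in> carrier R" "d i \<in> carrier R" "e_mult c i \<in> carrier R" "e_mult d i \<in> carrier R"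
    using c d(1) i e_mult_vec by (auto simp: vec_def)
  have "(c i \<ominus>\<^bsub>R\<^esub> e_mult c i) \<ominus>\<^bsub>R\<^esub> (d i \<ominus>\<^bsub>R\<^esub> e_mult d i)
      = (c i \<ominus>\<^bsub>R\<^esub> d i) \<ominus>\<^bsub>R\<^esub> (e_mult c i \<ominus>\<^bsub>R\<^esub> e_mult d i)"
    using cc by (simp add: R.ring_simprules)
  also have "\<dots> = \<zero>\<^bsub>R\<^esub>" using h cc by (simp add: R.minus_eq R.r_neg)
  finally have "c i \<ominus>\<^bsub>R\<^esub> e_mult c i = d i \<ominus>\<^bsub>R\<^esub> e_mult d i"
    using cc by (simp add: R.minus_eq_zero_iff)
  then show ?thesis by (simp add: coord_def d_def)
qed

lemma coord_closed: "i < n \<Longrightarrow> x \<in> carrier M \<Longrightarrow> coord i x \<in> carrier R"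
  using rep_lincomb e_mult_vec by (auto simp: coord_def vec_def)

lemma coord_add:
  assumes i: "i < n" and x: "x \<in> carrier M" and y: "y \<in> carrier M"
  shows "coord i (x \<oplus>\<^bsub>M\<^esub> y) = coord i x \<oplus>\<^bsub>R\<^esub> coord i y"
proof -
  define c d where "c = rep x" and "d = rep y"
  have c: "vec c" "x = lincomb M c s n" and d: "vec d" "y = lincomb M d s n"
    using rep_lincomb[OF x] rep_lincomb[OF y] by (simp_all add: c_def d_def)
  have cd: "vec (\<lambda>k. c k \<oplus>\<^bsub>R\<^esub> d k)" using c d by (auto simp: vec_def)
  have "x \<oplus>\<^bsub>M\<^esub> y = lincomb M (\<lambda>k. c k \<oplus>\<^bsub>R\<^esub> d k) s n"
    using lincomb_add[of n c d s] c d s_closed by (simp add: vec_def)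
  have cc: "c i \<in> carrier R" "d i \<in> carrier R" "e_mult c i \<in> carrier R" "e_mult d i \<in> carrier R"
    using c d i e_mult_vec by (auto simp: vec_def)
  have "coord i (x \<oplus>\<^bsub>M\<^esub> y) = (c i \<oplus>\<^bsub>R\<^esub> d i) \<ominus>\<^bsub>R\<^esub> (e_mult c i \<oplus>\<^bsub>R\<^esub> e_mult d i)"
    unfolding \<open>x \<oplus>\<^bsub>M\<^esub> y = _\<close> coord_lincomb[OF cd i] e_mult_add[OF c(1) d(1) i] ..
  also have "\<dots> = (c i \<ominus>\<^bsub>R\<^esub> e_mult c i) \<oplus>\<^bsub>R\<^esub> (d i \<ominus>\<^bsub>R\<^esub> e_mult d i)"
    using cc by (simp add: R.ring_simprules)
  finally show ?thesis using coord_lincomb[OF c(1) i] coord_lincomb[OF d(1) i] c(2) d(2) by simp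
qed

lemma coord_smult:
  assumes i: "i < n" and x: "x \<in> carrier M" and r: "r \<in> carrier R"
  shows "coord i (smult M r x) = coord i x \<otimes>\<^bsub>R\<^esub> r"
proof -
  define c where "c = rep x"
  have c: "vec c" "x = lincomb M c s n" using rep_lincomb[OF x] by (simp_all add: c_def)
  have cr: "vec (\<lambda>k. c k \<otimes>\<^bsub>R\<^esub> r)" using c r by (auto simp: vec_def)
  have "smult M r x = lincomb M (\<lambda>k. c k \<otimes>\<^bsub>R\<^esub> r) s n"
    using lincomb_smult[of n c r s] c r s_closed by (simp add: vec_def)
  have cc: "c i \<in> carrier R" "e_mult c i \<in> carrier R" using c i e_mult_vec by (auto simp: vec_def)
  have "coord i (smult M r x) = c i \<otimes>\<^bsub>R\<^esub> r \<ominus>\<^bsub>R\<^esub> e_mult c i \<otimes>\<^bsub>R\<^esub> r"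
    unfolding \<open>smult M r x = _\<close> coord_lincomb[OF cr i] e_mult_smult[OF c(1) r i] ..
  also have "\<dots> = (c i \<ominus>\<^bsub>R\<^esub> e_mult c i) \<otimes>\<^bsub>R\<^esub> r"
    using cc r by (simp add: R.ring_simprules)
  finally show ?thesis using coord_lincomb[OF c(1) i] c(2) by simp
qed

lemma coord_vanishing_form:
  assumes i: "i < n" shows "coord i \<in> H"
proof -
  have "coord i k = \<zero>\<^bsub>R\<^esub>" if k: "k \<in> K" for k
  proof -
    have kC: "k \<in> carrier M" "k \<in> C" using k submodule_K subset_form_closure by (auto simp: submodule_def)
    define c where "c = rep k"
    have c: "vec c" "k = lincomb M c s n" using rep_lincomb[OF kC(1)] by (simp_all add: c_def)
    then show ?thesis
      using coord_lincomb[OF c(1) i] e_mult_fixes[OF c(1) _ i] kC i by (simp add: vec_def R.r_neg R.minus_eq)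
  qed
  then show ?thesis
    unfolding vanishing_forms_def module_hom_def using coord_closed coord_add coord_smult i by auto
qed

lemma lincomb_coord_in_closure:
  assumes x: "x \<in> carrier M" shows "x \<ominus>\<^bsub>M\<^esub> lincomb M (\<lambda>i. coord i x) s n \<in> C"
proof -
  define c where "c = rep x"
  have c: "vec c" "x = lincomb M c s n" "rep x = c" using rep_lincomb[OF x] by (simp_all add: c_def)
  have "lincomb M (\<lambda>i. coord i x) s n = lincomb M (\<lambda>i. c i \<ominus>\<^bsub>R\<^esub> e_mult c i) s n"
    unfolding coord_def c(3) ..
  also have "\<dots> = x \<ominus>\<^bsub>M\<^esub> lincomb M (e_mult c) s n"
    using lincomb_minus[of n c "e_mult c" s] c e_mult_vec[OF c(1)] s_closed by (simp add: vec_def)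
  finally have "x \<ominus>\<^bsub>M\<^esub> lincomb M (\<lambda>i. coord i x) s n = lincomb M (e_mult c) s n"
    using x lincomb_s_closed[OF e_mult_vec[OF c(1)]]
    by (simp add: M.minus_eq M.minus_add M.minus_minus M.a_assoc[symmetric] M.r_neg M.l_zero)
  then show ?thesis using lincomb_e_mult_in_closure[OF c(1)] by simp
qed

end

context right_mod begin

lemma form_closure_coordinates:
  assumes fg: "fin_gen R M" and K: "submodule R M K" and baer: "\<forall>n\<ge>1. baer_ring (matring R n)"
  obtains n t g where "\<forall>i<n. t i \<in> carrier M" "\<forall>i<n. g i \<in> vanishing_forms R M K"
    "\<forall>x\<in>carrier M. x \<ominus>\<^bsub>M\<^esub> lincomb M (\<lambda>i. g i x) t n \<in> form_closure R M K"
proof -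
  obtain n s where n: "n \<ge> 1" and gen: "generates R M n s" by (rule generates_if_fin_gen[OF fg])
  let ?V = "(\<lambda>f k. f (s k)) ` vanishing_forms R M K"
  have V: "\<forall>v\<in>?V. \<forall>k<n. v k \<in> carrier R"
    using gen vanishing_form_closed by (auto simp: generates_def)
  obtain e where "\<forall>i<n. \<forall>j<n. e i j \<in> carrier R"
    and "\<forall>v\<in>?V. \<forall>j<n. finsum R (\<lambda>k. v k \<otimes>\<^bsub>R\<^esub> e k j) {..<n} = \<zero>\<^bsub>R\<^esub>"
    and "\<And>c. \<forall>k<n. c k \<in> carrier R \<Longrightarrow> \<forall>v\<in>?V. finsum R (\<lambda>k. v k \<otimes>\<^bsub>R\<^esub> c k) {..<n} = \<zero>\<^bsub>R\<^esub> \<Longrightarrow>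
           \<forall>i<n. finsum R (\<lambda>k. e i k \<otimes>\<^bsub>R\<^esub> c k) {..<n} = c i"
    by (fact baer_matring_annihilator_idempotent[OF R.ring_axioms baer[rule_format, OF n] V])
  then interpret form_coordinates R M K n s e
    using K gen by unfold_locales simp_all
  show ?thesis
    by (rule that[of n s coord]) (simp_all add: s_closed coord_vanishing_form lincomb_coord_in_closure)
qed

end

locale form_splitting = right_mod R M for R :: "'a ring" and M :: "('a, 'm) module" +
  fixes C :: "'m set" and n :: nat and t :: "nat \<Rightarrow> 'm" and g :: "nat \<Rightarrow> 'm \<Rightarrow> 'a"
  assumes submodule_C: "submodule R M C"
    and t_closed: "\<forall>i<n. t i \<in> carrier M"
    and g_hom: "\<forall>i<n. module_hom R M (RR R) (g i)"
    and g_vanishes: "\<forall>i<n. \<forall>c\<in>C. g i c = \<zero>\<^bsub>R\<^esub>"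
    and splits: "\<forall>x\<in>carrier M. x \<ominus>\<^bsub>M\<^esub> lincomb M (\<lambda>i. g i x) t n \<in> C"
begin

definition proj :: "'m \<Rightarrow> 'm" where "proj x = lincomb M (\<lambda>i. g i x) t n"

definition complement :: "'m set" where "complement = proj ` carrier M"

lemma g_right_mod_hom: "i < n \<Longrightarrow> right_mod_hom R M (RR R) (g i)"
  using g_hom by (intro right_mod_homI right_module RR_right_module R.ring_axioms) auto

lemma g_closed: "i < n \<Longrightarrow> x \<in> carrier M \<Longrightarrow> g i x \<in> carrier R"
  using right_mod_hom.hom_closed[OF g_right_mod_hom] by fastforce

lemma C_subset: "C \<subseteq> carrier M" using submodule_C by (simp add: submodule_def)

lemma proj_closed: "x \<in> carrier M \<Longrightarrow> proj x \<in> carrier M"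
  unfolding proj_def using t_closed g_closed by (intro lincomb_closed) auto

lemma minus_proj_in_C: "x \<in> carrier M \<Longrightarrow> x \<ominus>\<^bsub>M\<^esub> proj x \<in> C"
  using splits by (simp add: proj_def)

lemma proj_hom: "module_hom R M M proj"
  unfolding module_hom_def
proof (intro conjI ballI)
  fix x y assume x: "x \<in> carrier M" and y: "y \<in> carrier M"
  have "proj (x \<oplus>\<^bsub>M\<^esub> y) = lincomb M (\<lambda>i. g i x \<oplus>\<^bsub>R\<^esub> g i y) t n"
    unfolding proj_def
    by (rule M.finsum_cong') (use x y t_closed g_closed right_mod_hom.hom_add[OF g_right_mod_hom] in auto)
  also have "\<dots> = proj x \<oplus>\<^bsub>M\<^esub> proj y"
    unfolding proj_def by (rule lincomb_add) (use x y t_closed g_closed in auto)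
  finally show "proj (x \<oplus>\<^bsub>M\<^esub> y) = proj x \<oplus>\<^bsub>M\<^esub> proj y" .
next
  fix x r assume x: "x \<in> carrier M" and r: "r \<in> carrier R"
  have "proj (smult M r x) = lincomb M (\<lambda>i. g i x \<otimes>\<^bsub>R\<^esub> r) t n"
    unfolding proj_def
    by (rule M.finsum_cong') (use x r t_closed g_closed right_mod_hom.hom_smult[OF g_right_mod_hom] in auto)
  also have "\<dots> = smult M r (proj x)"
    unfolding proj_def by (rule lincomb_smult) (use x r t_closed g_closed in auto)
  finally show "proj (smult M r x) = smult M r (proj x)" .
qed (rule proj_closed)

sublocale proj: right_mod_hom R M M proj by (intro right_mod_homI right_module proj_hom)

lemma g_proj: "i < n \<Longrightarrow> x \<in> carrier M \<Longrightarrow> g i (proj x) = g i x"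
proof -
  assume i: "i < n" and x: "x \<in> carrier M"
  interpret g: right_mod_hom R M "RR R" "g i" by (rule g_right_mod_hom[OF i])
  have "g i x \<ominus>\<^bsub>RR R\<^esub> g i (proj x) = \<zero>\<^bsub>RR R\<^esub>"
    using g_vanishes minus_proj_in_C[OF x] i g.hom_minus[OF x proj_closed[OF x]] by simp
  then show ?thesis
    using g.N.M.minus_eq_zero_iff[OF g.hom_closed[OF x] g.hom_closed[OF proj_closed[OF x]]] by simp
qed

lemma proj_idem:
  assumes x: "x \<in> carrier M" shows "proj (proj x) = proj x"
proof -
  have "proj (proj x) = lincomb M (\<lambda>i. g i (proj x)) t n" by (simp only: proj_def)
  also have "\<dots> = lincomb M (\<lambda>i. g i x) t n"
    by (rule M.finsum_cong') (use x t_closed g_closed g_proj in auto)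
  finally show ?thesis by (simp only: proj_def)
qed

lemma proj_C: "c \<in> C \<Longrightarrow> proj c = \<zero>\<^bsub>M\<^esub>"
proof -
  assume c: "c \<in> C"
  have "proj c = finsum M (\<lambda>i. \<zero>\<^bsub>M\<^esub>) {..<n}"
    unfolding proj_def by (rule M.finsum_cong') (use c g_vanishes t_closed in auto)
  then show ?thesis by simp
qed

lemma complement_submodule: "submodule R M complement"
  unfolding complement_def by (rule proj.image_submodule)

lemma complement_subset: "complement \<subseteq> carrier M"
  unfolding complement_def using proj_closed by auto

lemma proj_complement: "d \<in> complement \<Longrightarrow> proj d = d"
  unfolding complement_def using proj_idem by auto

lemma C_inter_complement: "C \<inter> complement = {\<zero>\<^bsub>M\<^esub>}"
proof
  show "C \<inter> complement \<subseteq> {\<zero>\<^bsub>M\<^esub>}"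
  proof
    fix d assume "d \<in> C \<inter> complement"
    then have "proj d = \<zero>\<^bsub>M\<^esub>" "proj d = d" using proj_C proj_complement by blast+
    then show "d \<in> {\<zero>\<^bsub>M\<^esub>}" by (metis singletonI)
  qed
  show "{\<zero>\<^bsub>M\<^esub>} \<subseteq> C \<inter> complement"
    using submodule_C complement_submodule by (simp add: submodule_def)
qed

lemma C_plus_complement: "x \<in> carrier M \<Longrightarrow> x = (x \<ominus>\<^bsub>M\<^esub> proj x) \<oplus>\<^bsub>M\<^esub> proj x"
  using proj_closed by (simp add: M.minus_eq M.a_assoc M.l_neg)

lemma C_direct_summand: "direct_summand R M C"
  unfolding direct_summand_def
proof (intro conjI exI[of _ complement] submodule_C complement_submodule C_inter_complement ballI)
  fix x assume x: "x \<in> carrier M"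
  have "proj x \<in> complement" using x by (simp add: complement_def)
  then show "\<exists>c\<in>C. \<exists>d\<in>complement. x = c \<oplus>\<^bsub>M\<^esub> d"
    using C_plus_complement[OF x] minus_proj_in_C[OF x] by blast
qed

lemma minus_proj_hom: "module_hom R M M (\<lambda>x. x \<ominus>\<^bsub>M\<^esub> proj x)"
  unfolding module_hom_def
proof (intro conjI ballI)
  fix x y assume x: "x \<in> carrier M" and y: "y \<in> carrier M"
  show "x \<oplus>\<^bsub>M\<^esub> y \<ominus>\<^bsub>M\<^esub> proj (x \<oplus>\<^bsub>M\<^esub> y) = (x \<ominus>\<^bsub>M\<^esub> proj x) \<oplus>\<^bsub>M\<^esub> (y \<ominus>\<^bsub>M\<^esub> proj y)"
    using x y proj_closed[OF x] proj_closed[OF y] by (simp add: proj.hom_add M.minus_eq M.minus_add M.a_ac)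
next
  fix x r assume x: "x \<in> carrier M" and r: "r \<in> carrier R"
  show "smult M r x \<ominus>\<^bsub>M\<^esub> proj (smult M r x) = smult M r (x \<ominus>\<^bsub>M\<^esub> proj x)"
    using x r proj_closed[OF x] by (simp add: proj.hom_smult smult_minus_right)
qed (use proj_closed in simp)

lemma minus_proj_C: "c \<in> C \<Longrightarrow> c \<ominus>\<^bsub>M\<^esub> proj c = c"
  using proj_C C_subset by (auto simp: M.minus_eq)

lemma quot_fin_gen_projective: "fin_gen R (quot_mod R M C) \<and> projective R (quot_mod R M C)"
proof -
  interpret right_mod_quot R M C by (intro right_mod_quotI right_module submodule_C)
  define fs where "fs i = (\<lambda>A. g i (SOME a. a \<in> A))" for i
  have fs_hom: "\<forall>i<n. module_hom R Q (RR R) (fs i)"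
    unfolding fs_def using induced_hom(1)[OF RR_right_module[OF R.ring_axioms]] g_hom g_vanishes by simp
  have fs_coset: "fs i (C +>\<^bsub>M\<^esub> x) = g i x" if "i < n" "x \<in> carrier M" for i x
    unfolding fs_def using induced_hom(2)[OF RR_right_module[OF R.ring_axioms]] g_hom g_vanishes that by simp
  have xs: "\<forall>i<n. C +>\<^bsub>M\<^esub> t i \<in> carrier Q" using t_closed by auto
  have dual_basis: "\<forall>A\<in>carrier Q. A = lincomb Q (\<lambda>i. fs i A) (\<lambda>i. C +>\<^bsub>M\<^esub> t i) n"
  proof
    fix A assume "A \<in> carrier Q"
    then obtain x where x: "x \<in> carrier M" "A = C +>\<^bsub>M\<^esub> x" by (auto simp: quot_carrier)
    have "lincomb Q (\<lambda>i. fs i A) (\<lambda>i. C +>\<^bsub>M\<^esub> t i) n = finsum Q (\<lambda>i. C +>\<^bsub>M\<^esub> smult M (g i x) (t i)) {..<n}"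
      by (rule Q.M.finsum_cong') (use x t_closed g_closed fs_coset in \<open>auto simp: quot_smult\<close>)
    also have "\<dots> = C +>\<^bsub>M\<^esub> proj x"
      unfolding proj_def by (rule quot_map.hom_finsum[symmetric]) (use x t_closed g_closed in auto)
    also have "\<dots> = A" using x minus_proj_in_C coset_eq_iff[OF x(1) proj_closed[OF x(1)]] by simp
    finally show "A = lincomb Q (\<lambda>i. fs i A) (\<lambda>i. C +>\<^bsub>M\<^esub> t i) n" ..
  qed
  show ?thesis
    using Q.dual_basis_projective[OF xs fs_hom dual_basis] Q.fin_gen_if_dual_basis[OF xs fs_hom dual_basis]
    by simp
qed

lemma complement_fin_gen_projective:
  "fin_gen R (M\<lparr>carrier := complement\<rparr>) \<and> projective R (M\<lparr>carrier := complement\<rparr>)"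
proof -
  let ?D = "M\<lparr>carrier := complement\<rparr>"
  interpret D: right_mod R ?D by (intro right_modI right_module_restrict complement_submodule)
  have xs: "\<forall>i<n. proj (t i) \<in> carrier ?D" using t_closed by (simp add: complement_def)
  have fs_hom: "\<forall>i<n. module_hom R ?D (RR R) (g i)"
    using g_hom complement_subset unfolding module_hom_def by (auto simp: subset_iff)
  have dual_basis: "\<forall>d\<in>carrier ?D. d = lincomb ?D (\<lambda>i. g i d) (\<lambda>i. proj (t i)) n"
  proof
    fix d assume "d \<in> carrier ?D"
    then have d: "d \<in> complement" "d \<in> carrier M" using complement_subset by auto
    have terms: "smult M (g i d) (proj (t i)) = proj (smult M (g i d) (t i))" if "i < n" for i
      using that t_closed g_closed d by (simp add: proj.hom_smult)
    have "lincomb ?D (\<lambda>i. g i d) (\<lambda>i. proj (t i)) n = lincomb M (\<lambda>i. g i d) (\<lambda>i. proj (t i)) n"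
      using finsum_restrict[OF complement_submodule, of "{..<n}" "\<lambda>i. smult M (g i d) (proj (t i))"]
        terms t_closed g_closed d by (simp add: complement_def)
    also have "\<dots> = finsum M (\<lambda>i. proj (smult M (g i d) (t i))) {..<n}"
      by (rule M.finsum_cong') (use terms t_closed g_closed d in auto)
    also have "\<dots> = proj (proj d)"
      unfolding proj_def[of d] by (rule proj.hom_finsum[symmetric]) (use t_closed g_closed d in auto)
    also have "\<dots> = d" using proj_complement d proj_closed by simp
    finally show "d = lincomb ?D (\<lambda>i. g i d) (\<lambda>i. proj (t i)) n" ..
  qed
  show ?thesis
    using D.dual_basis_projective[OF xs fs_hom dual_basis] D.fin_gen_if_dual_basis[OF xs fs_hom dual_basis]
    by simp
qed

end

section \<open>Bounded torsion\<close>

context right_mod begin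

lemma form_splitting_exists:
  assumes "fin_gen R M" "submodule R M K" "\<forall>n\<ge>1. baer_ring (matring R n)"
  obtains n t g where "form_splitting R M (form_closure R M K) n t g"
proof -
  obtain n t g where t: "\<forall>i<n. t i \<in> carrier M" and g: "\<forall>i<n. g i \<in> vanishing_forms R M K"
    and splits: "\<forall>x\<in>carrier M. x \<ominus>\<^bsub>M\<^esub> lincomb M (\<lambda>i. g i x) t n \<in> form_closure R M K"
    by (rule form_closure_coordinates[OF assms])
  have "form_splitting R M (form_closure R M K) n t g"
    by unfold_locales
       (use t g splits form_closure_submodule in \<open>auto simp: vanishing_forms_def form_closure_def\<close>)
  then show ?thesis by (rule that)
qed

text \<open>The bounded torsion submodule is the common kernel of all forms as soon as that kernel is a
  retract of M: a form on the kernel extends along the retraction and therefore vanishes.\<close>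

lemma torsB_eq_form_closure_if_retract:
  assumes p: "module_hom R M M p" "\<forall>x\<in>carrier M. p x \<in> form_closure R M {\<zero>\<^bsub>M\<^esub>}"
    "\<forall>c\<in>form_closure R M {\<zero>\<^bsub>M\<^esub>}. p c = c"
  shows "torsB R M = form_closure R M {\<zero>\<^bsub>M\<^esub>}"
proof
  let ?C = "form_closure R M {\<zero>\<^bsub>M\<^esub>}"
  show "torsB R M \<subseteq> ?C"
  proof
    fix x assume "x \<in> torsB R M"
    then obtain N where N: "submodule R M N" "bounded R (M\<lparr>carrier := N\<rparr>)" "x \<in> N"
      unfolding torsB_def by blast
    have "f x = \<zero>\<^bsub>R\<^esub>" if f: "module_hom R M (RR R) f" for f
    proof -
      have "module_hom R (M\<lparr>carrier := N\<rparr>) (RR R) f"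
        using f N(1) unfolding module_hom_def submodule_def by (simp add: subset_iff)
      then show ?thesis using N(2,3) unfolding bounded_def by auto
    qed
    then show "x \<in> ?C" using N(1,3) by (simp add: form_closure_zero submodule_def subset_iff)
  qed
  have "bounded R (M\<lparr>carrier := ?C\<rparr>)"
    unfolding bounded_def
  proof (intro allI impI ballI)
    fix f c assume f: "module_hom R (M\<lparr>carrier := ?C\<rparr>) (RR R) f" and c: "c \<in> carrier (M\<lparr>carrier := ?C\<rparr>)"
    have "module_hom R M (RR R) (f \<circ> p)" using f p unfolding module_hom_def by auto
    then have "f (p c) = \<zero>\<^bsub>R\<^esub>" using c by (simp add: form_closure_zero)
    then show "f c = \<zero>\<^bsub>R\<^esub>" using c p(3) by simp
  qed
  then show "?C \<subseteq> torsB R M" unfolding torsB_def using form_closure_submodule by blast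
qed

lemma torsB_eq_form_closure:
  assumes "fin_gen R M" "\<forall>n\<ge>1. baer_ring (matring R n)"
  shows "torsB R M = form_closure R M {\<zero>\<^bsub>M\<^esub>}"
proof -
  obtain n t g where "form_splitting R M (form_closure R M {\<zero>\<^bsub>M\<^esub>}) n t g"
    using form_splitting_exists[OF assms(1) submodule_zero assms(2)] by blast
  then interpret form_splitting R M "form_closure R M {\<zero>\<^bsub>M\<^esub>}" n t g .
  show ?thesis
    by (rule torsB_eq_form_closure_if_retract[OF minus_proj_hom])
       (use minus_proj_in_C minus_proj_C in auto)
qed

lemma form_closure_summand_quotient_projective:
  assumes "fin_gen R M" "submodule R M K" "\<forall>n\<ge>1. baer_ring (matring R n)"
  shows "fin_gen R (quot_mod R M (form_closure R M K)) \<and> projective R (quot_mod R M (form_closure R M K)) \<and>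
         direct_summand R M (form_closure R M K)"
proof -
  obtain n t g where "form_splitting R M (form_closure R M K) n t g"
    by (rule form_splitting_exists[OF assms])
  then show ?thesis
    using form_splitting.quot_fin_gen_projective form_splitting.C_direct_summand by blast
qed

end

context right_mod_quot begin

lemma coset_in_form_closure_iff:
  assumes x: "x \<in> carrier M"
  shows "K +>\<^bsub>M\<^esub> x \<in> form_closure R Q {\<zero>\<^bsub>Q\<^esub>} \<longleftrightarrow> x \<in> form_closure R M K"
proof
  assume x_cl: "K +>\<^bsub>M\<^esub> x \<in> form_closure R Q {\<zero>\<^bsub>Q\<^esub>}"
  have vanish: "f x = \<zero>\<^bsub>R\<^esub>" if f: "f \<in> vanishing_forms R M K" for f
  proof -
    have fh: "module_hom R M (RR R) f" "\<forall>k\<in>K. f k = \<zero>\<^bsub>RR R\<^esub>" using f by (auto simp: vanishing_forms_def)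
    note induced = induced_hom[OF RR_right_module[OF R.ring_axioms] fh]
    have all: "\<forall>F. module_hom R Q (RR R) F \<longrightarrow> F (K +>\<^bsub>M\<^esub> x) = \<zero>\<^bsub>R\<^esub>"
      using x_cl unfolding Q.form_closure_zero by blast
    have "f (SOME a. a \<in> K +>\<^bsub>M\<^esub> x) = \<zero>\<^bsub>R\<^esub>"
      using all[rule_format, OF induced(1)] by simp
    then show ?thesis using induced(2)[OF x] by simp
  qed
  show "x \<in> form_closure R M K" unfolding form_closure_def using x by (intro CollectI conjI ballI) (assumption | rule vanish)+
next
  assume x_cl: "x \<in> form_closure R M K"
  have vanish: "F (K +>\<^bsub>M\<^esub> x) = \<zero>\<^bsub>R\<^esub>" if F: "module_hom R Q (RR R) F" for F
  proof -
    interpret F: right_mod_hom R Q "RR R" F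
      by (intro right_mod_homI quot_right_module RR_right_module R.ring_axioms F)
    have "F (K +>\<^bsub>M\<^esub> k) = \<zero>\<^bsub>R\<^esub>" if k: "k \<in> K" for k
    proof -
      have "K +>\<^bsub>M\<^esub> k = K" using coset_eq_K_iff[of k] k K_subset by blast
      then have "K +>\<^bsub>M\<^esub> k = \<zero>\<^bsub>Q\<^esub>" by (simp only: quot_zero coset_zero)
      then show ?thesis using F.hom_zero by (simp only: RR_simps)
    qed
    then have "F \<circ> (\<lambda>x. K +>\<^bsub>M\<^esub> x) \<in> vanishing_forms R M K"
      using module_hom_comp[OF quot_map_hom F] by (simp add: vanishing_forms_def)
    then have "(F \<circ> (\<lambda>x. K +>\<^bsub>M\<^esub> x)) x = \<zero>\<^bsub>R\<^esub>" using x_cl unfolding form_closure_def by blast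
    then show ?thesis by simp
  qed
  show "K +>\<^bsub>M\<^esub> x \<in> form_closure R Q {\<zero>\<^bsub>Q\<^esub>}"
    unfolding Q.form_closure_zero using x by (intro CollectI conjI allI impI coset_in_quot) (assumption | rule vanish)+
qed

lemma clB_eq_form_closure:
  assumes "fin_gen R M" "\<forall>n\<ge>1. baer_ring (matring R n)"
  shows "clB R M K = form_closure R M K"
proof -
  have torsB_Q: "torsB R Q = form_closure R Q {\<zero>\<^bsub>Q\<^esub>}"
    by (rule Q.torsB_eq_form_closure[OF quot_fin_gen[OF assms(1)] assms(2)])
  have "x \<in> clB R M K \<longleftrightarrow> x \<in> form_closure R M K" for x
  proof (cases "x \<in> carrier M")
    case True then show ?thesis unfolding clB_def torsB_Q using coset_in_form_closure_iff by simp
  next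
    case False then show ?thesis by (simp add: clB_def form_closure_def)
  qed
  then show ?thesis by blast
qed

end

section \<open>Singular submodules\<close>

locale ring_right_ideals = fixes R :: "'a ring" assumes is_ring: "ring R"
begin

sublocale R: ring R by (rule is_ring)

lemma right_ideal_iff:
  "right_ideal R I \<longleftrightarrow> I \<subseteq> carrier R \<and> \<zero>\<^bsub>R\<^esub> \<in> I \<and> (\<forall>x\<in>I. \<forall>y\<in>I. x \<oplus>\<^bsub>R\<^esub> y \<in> I) \<and>
     (\<forall>x\<in>I. \<ominus>\<^bsub>R\<^esub> x \<in> I) \<and> (\<forall>x\<in>I. \<forall>r\<in>carrier R. x \<otimes>\<^bsub>R\<^esub> r \<in> I)"
proof -
  have "(\<forall>x\<in>I. \<ominus>\<^bsub>RR R\<^esub> x \<in> I) \<longleftrightarrow> (\<forall>x\<in>I. \<ominus>\<^bsub>R\<^esub> x \<in> I)" if "I \<subseteq> carrier R"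
  proof -
    have "\<forall>x\<in>I. \<ominus>\<^bsub>RR R\<^esub> x = \<ominus>\<^bsub>R\<^esub> x" using RR_a_inv[OF is_ring] that by blast
    then show ?thesis by simp
  qed
  then show ?thesis unfolding right_ideal_def submodule_def by auto
qed

lemma right_idealD:
  assumes "right_ideal R L"
  shows "L \<subseteq> carrier R" "\<zero>\<^bsub>R\<^esub> \<in> L" "\<And>x y. x \<in> L \<Longrightarrow> y \<in> L \<Longrightarrow> x \<oplus>\<^bsub>R\<^esub> y \<in> L"
    "\<And>x. x \<in> L \<Longrightarrow> \<ominus>\<^bsub>R\<^esub> x \<in> L" "\<And>x r. x \<in> L \<Longrightarrow> r \<in> carrier R \<Longrightarrow> x \<otimes>\<^bsub>R\<^esub> r \<in> L"
  using assms unfolding right_ideal_iff by blast+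

lemma right_ideal_Int: "right_ideal R I \<Longrightarrow> right_ideal R J \<Longrightarrow> right_ideal R (I \<inter> J)"
  unfolding right_ideal_iff by blast

lemma essential_right_idealD:
  assumes "essential_right_ideal R I" "right_ideal R J" "J \<noteq> {\<zero>\<^bsub>R\<^esub>}"
  obtains x where "x \<in> I" "x \<in> J" "x \<noteq> \<zero>\<^bsub>R\<^esub>"
proof -
  have "I \<inter> J \<noteq> {\<zero>\<^bsub>R\<^esub>}" using assms unfolding essential_right_ideal_def by blast
  moreover have "\<zero>\<^bsub>R\<^esub> \<in> I \<inter> J"
    using assms right_idealD(2) unfolding essential_right_ideal_def by blast
  ultimately show ?thesis using that by blast
qed

lemma essential_right_ideal_superset:
  assumes I: "essential_right_ideal R I" and J: "right_ideal R J" and IJ: "I \<subseteq> J"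
  shows "essential_right_ideal R J"
  unfolding essential_right_ideal_def
proof (intro conjI allI impI J)
  fix L assume L: "right_ideal R L \<and> L \<noteq> {\<zero>\<^bsub>R\<^esub>}"
  obtain x where "x \<in> I" "x \<in> L" "x \<noteq> \<zero>\<^bsub>R\<^esub>"
    using essential_right_idealD[OF I conjunct1[OF L] conjunct2[OF L]] .
  then show "J \<inter> L \<noteq> {\<zero>\<^bsub>R\<^esub>}" using IJ by blast
qed

lemma essential_right_ideal_carrier: "essential_right_ideal R (carrier R)"
  unfolding essential_right_ideal_def
proof (intro conjI allI impI)
  show "right_ideal R (carrier R)" unfolding right_ideal_iff by auto
  fix J assume J: "right_ideal R J \<and> J \<noteq> {\<zero>\<^bsub>R\<^esub>}"
  then have "J \<subseteq> carrier R" by (simp add: right_ideal_iff)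
  then show "carrier R \<inter> J \<noteq> {\<zero>\<^bsub>R\<^esub>}" using J by (simp add: Int_absorb1)
qed

lemma essential_right_ideal_Int:
  assumes I: "essential_right_ideal R I" and J: "essential_right_ideal R J"
  shows "essential_right_ideal R (I \<inter> J)"
  unfolding essential_right_ideal_def
proof (intro conjI allI impI)
  have I': "right_ideal R I" and J': "right_ideal R J"
    using I J by (simp_all add: essential_right_ideal_def)
  show "right_ideal R (I \<inter> J)" by (rule right_ideal_Int[OF I' J'])
  fix L assume L: "right_ideal R L \<and> L \<noteq> {\<zero>\<^bsub>R\<^esub>}"
  obtain x where x: "x \<in> I" "x \<in> L" "x \<noteq> \<zero>\<^bsub>R\<^esub>"
    using essential_right_idealD[OF I conjunct1[OF L] conjunct2[OF L]] .
  then have "I \<inter> L \<noteq> {\<zero>\<^bsub>R\<^esub>}" by blast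
  then obtain y where "y \<in> J" "y \<in> I \<inter> L" "y \<noteq> \<zero>\<^bsub>R\<^esub>"
    using essential_right_idealD[OF J right_ideal_Int[OF I' conjunct1[OF L]]] by blast
  then show "I \<inter> J \<inter> L \<noteq> {\<zero>\<^bsub>R\<^esub>}" by blast
qed

lemma right_ideal_left_mult_image:
  assumes L: "right_ideal R L" and r: "r \<in> carrier R"
  shows "right_ideal R ((\<lambda>j. r \<otimes>\<^bsub>R\<^esub> j) ` L)"
  unfolding right_ideal_iff
proof (intro conjI ballI)
  note Lf = right_idealD[OF L]
  show "(\<lambda>j. r \<otimes>\<^bsub>R\<^esub> j) ` L \<subseteq> carrier R" using Lf(1) r by auto
  show "\<zero>\<^bsub>R\<^esub> \<in> (\<lambda>j. r \<otimes>\<^bsub>R\<^esub> j) ` L" using Lf(2) r by (intro image_eqI[of _ _ "\<zero>\<^bsub>R\<^esub>"]) auto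
next
  note Lf = right_idealD[OF L]
  fix x y assume "x \<in> (\<lambda>j. r \<otimes>\<^bsub>R\<^esub> j) ` L" "y \<in> (\<lambda>j. r \<otimes>\<^bsub>R\<^esub> j) ` L"
  then obtain a b where ab: "a \<in> L" "b \<in> L" "x = r \<otimes>\<^bsub>R\<^esub> a" "y = r \<otimes>\<^bsub>R\<^esub> b" by auto
  then have "x \<oplus>\<^bsub>R\<^esub> y = r \<otimes>\<^bsub>R\<^esub> (a \<oplus>\<^bsub>R\<^esub> b)" using Lf(1) r by (simp add: R.r_distr subset_iff)
  then show "x \<oplus>\<^bsub>R\<^esub> y \<in> (\<lambda>j. r \<otimes>\<^bsub>R\<^esub> j) ` L" using Lf(3)[OF ab(1,2)] by blast
next
  note Lf = right_idealD[OF L]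
  fix x assume "x \<in> (\<lambda>j. r \<otimes>\<^bsub>R\<^esub> j) ` L"
  then obtain a where a: "a \<in> L" "x = r \<otimes>\<^bsub>R\<^esub> a" by auto
  then have "\<ominus>\<^bsub>R\<^esub> x = r \<otimes>\<^bsub>R\<^esub> (\<ominus>\<^bsub>R\<^esub> a)" using Lf(1) r by (simp add: R.r_minus subset_iff)
  then show "\<ominus>\<^bsub>R\<^esub> x \<in> (\<lambda>j. r \<otimes>\<^bsub>R\<^esub> j) ` L" using Lf(4)[OF a(1)] by blast
next
  note Lf = right_idealD[OF L]
  fix x t assume "x \<in> (\<lambda>j. r \<otimes>\<^bsub>R\<^esub> j) ` L" and t: "t \<in> carrier R"
  then obtain a where a: "a \<in> L" "x = r \<otimes>\<^bsub>R\<^esub> a" by auto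
  then have "x \<otimes>\<^bsub>R\<^esub> t = r \<otimes>\<^bsub>R\<^esub> (a \<otimes>\<^bsub>R\<^esub> t)" using Lf(1) r t by (simp add: R.m_assoc subset_iff)
  then show "x \<otimes>\<^bsub>R\<^esub> t \<in> (\<lambda>j. r \<otimes>\<^bsub>R\<^esub> j) ` L" using Lf(5)[OF a(1) t] by blast
qed

lemma right_ideal_left_mult_preimage:
  assumes I: "right_ideal R I" and r: "r \<in> carrier R"
  shows "right_ideal R {s \<in> carrier R. r \<otimes>\<^bsub>R\<^esub> s \<in> I}"
  unfolding right_ideal_iff
proof (intro conjI ballI)
  note If = right_idealD[OF I]
  show "\<zero>\<^bsub>R\<^esub> \<in> {s \<in> carrier R. r \<otimes>\<^bsub>R\<^esub> s \<in> I}" using r If(2) by simp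
  fix x y assume "x \<in> {s \<in> carrier R. r \<otimes>\<^bsub>R\<^esub> s \<in> I}" "y \<in> {s \<in> carrier R. r \<otimes>\<^bsub>R\<^esub> s \<in> I}"
  then show "x \<oplus>\<^bsub>R\<^esub> y \<in> {s \<in> carrier R. r \<otimes>\<^bsub>R\<^esub> s \<in> I}" using r If(3) by (simp add: R.r_distr)
next
  note If = right_idealD[OF I]
  fix x assume "x \<in> {s \<in> carrier R. r \<otimes>\<^bsub>R\<^esub> s \<in> I}"
  then show "\<ominus>\<^bsub>R\<^esub> x \<in> {s \<in> carrier R. r \<otimes>\<^bsub>R\<^esub> s \<in> I}" using r If(4) by (simp add: R.r_minus)
next
  note If = right_idealD[OF I]
  fix x t assume "x \<in> {s \<in> carrier R. r \<otimes>\<^bsub>R\<^esub> s \<in> I}" "t \<in> carrier R"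
  then show "x \<otimes>\<^bsub>R\<^esub> t \<in> {s \<in> carrier R. r \<otimes>\<^bsub>R\<^esub> s \<in> I}" using r If(5) by (simp add: R.m_assoc[symmetric])
qed auto

text \<open>If r kills a nonzero part of L, that part already lies in the preimage; otherwise r L is a
  nonzero right ideal and meets I.\<close>

lemma essential_right_ideal_left_mult_preimage:
  assumes I: "essential_right_ideal R I" and r: "r \<in> carrier R"
  shows "essential_right_ideal R {s \<in> carrier R. r \<otimes>\<^bsub>R\<^esub> s \<in> I}"
  unfolding essential_right_ideal_def
proof (intro conjI allI impI)
  have I_ideal: "right_ideal R I" using I by (simp add: essential_right_ideal_def)
  show "right_ideal R {s \<in> carrier R. r \<otimes>\<^bsub>R\<^esub> s \<in> I}" by (rule right_ideal_left_mult_preimage[OF I_ideal r])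
  fix L assume L: "right_ideal R L \<and> L \<noteq> {\<zero>\<^bsub>R\<^esub>}"
  note Lf = right_idealD[OF conjunct1[OF L]]
  show "{s \<in> carrier R. r \<otimes>\<^bsub>R\<^esub> s \<in> I} \<inter> L \<noteq> {\<zero>\<^bsub>R\<^esub>}"
  proof (cases "\<forall>j\<in>L. r \<otimes>\<^bsub>R\<^esub> j = \<zero>\<^bsub>R\<^esub>")
    case True
    then have "L \<subseteq> {s \<in> carrier R. r \<otimes>\<^bsub>R\<^esub> s \<in> I}" using Lf(1) right_idealD(2)[OF I_ideal] by auto
    then show ?thesis using L by blast
  next
    case False
    then have "(\<lambda>j. r \<otimes>\<^bsub>R\<^esub> j) ` L \<noteq> {\<zero>\<^bsub>R\<^esub>}" by auto
    then obtain y where y: "y \<in> I" "y \<in> (\<lambda>j. r \<otimes>\<^bsub>R\<^esub> j) ` L" "y \<noteq> \<zero>\<^bsub>R\<^esub>"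
      using essential_right_idealD[OF I right_ideal_left_mult_image[OF conjunct1[OF L] r]] by blast
    then obtain j where j: "j \<in> L" "y = r \<otimes>\<^bsub>R\<^esub> j" by auto
    then have "j \<noteq> \<zero>\<^bsub>R\<^esub>" "j \<in> {s \<in> carrier R. r \<otimes>\<^bsub>R\<^esub> s \<in> I}" using y r Lf(1) by auto
    then show ?thesis using j(1) by blast
  qed
qed

end

sublocale right_mod \<subseteq> RI: ring_right_ideals R by unfold_locales

context right_mod begin

definition ann :: "'m \<Rightarrow> 'a set" where "ann x = {r \<in> carrier R. smult M r x = \<zero>\<^bsub>M\<^esub>}"

lemma ann_right_ideal: "x \<in> carrier M \<Longrightarrow> right_ideal R (ann x)"
  unfolding RI.right_ideal_iff ann_def by (auto simp: smult_add_left smult_neg_left smult_mult)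

lemma singular_sub_eq: "singular_sub R M = {x \<in> carrier M. essential_right_ideal R (ann x)}"
  by (simp add: singular_sub_def ann_def)

lemma singular_sub_submodule: "submodule R M (singular_sub R M)"
  unfolding submodule_def singular_sub_eq
proof (intro conjI ballI)
  have "ann \<zero>\<^bsub>M\<^esub> = carrier R" by (auto simp: ann_def)
  then show "\<zero>\<^bsub>M\<^esub> \<in> {x \<in> carrier M. essential_right_ideal R (ann x)}"
    using RI.essential_right_ideal_carrier by simp
next
  fix x y assume "x \<in> {x \<in> carrier M. essential_right_ideal R (ann x)}"
    and "y \<in> {x \<in> carrier M. essential_right_ideal R (ann x)}"
  then have x: "x \<in> carrier M" "essential_right_ideal R (ann x)"
    and y: "y \<in> carrier M" "essential_right_ideal R (ann y)" by auto
  have "ann x \<inter> ann y \<subseteq> ann (x \<oplus>\<^bsub>M\<^esub> y)" using x y by (auto simp: ann_def smult_add_right)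
  then have "essential_right_ideal R (ann (x \<oplus>\<^bsub>M\<^esub> y))"
    using RI.essential_right_ideal_superset[OF RI.essential_right_ideal_Int[OF x(2) y(2)] ann_right_ideal] x y
    by simp
  then show "x \<oplus>\<^bsub>M\<^esub> y \<in> {x \<in> carrier M. essential_right_ideal R (ann x)}" using x y by simp
next
  fix x assume "x \<in> {x \<in> carrier M. essential_right_ideal R (ann x)}"
  then have x: "x \<in> carrier M" "essential_right_ideal R (ann x)" by auto
  have "ann x \<subseteq> ann (\<ominus>\<^bsub>M\<^esub> x)" using x by (auto simp: ann_def smult_neg_right)
  then have "essential_right_ideal R (ann (\<ominus>\<^bsub>M\<^esub> x))"
    using RI.essential_right_ideal_superset[OF x(2) ann_right_ideal] x by simp
  then show "\<ominus>\<^bsub>M\<^esub> x \<in> {x \<in> carrier M. essential_right_ideal R (ann x)}" using x by simp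
next
  fix x r assume "x \<in> {x \<in> carrier M. essential_right_ideal R (ann x)}" and r: "r \<in> carrier R"
  then have x: "x \<in> carrier M" "essential_right_ideal R (ann x)" by auto
  have "{s \<in> carrier R. r \<otimes>\<^bsub>R\<^esub> s \<in> ann x} \<subseteq> ann (smult M r x)"
    using x r by (auto simp: ann_def smult_mult[symmetric])
  then have "essential_right_ideal R (ann (smult M r x))"
    using RI.essential_right_ideal_superset[OF RI.essential_right_ideal_left_mult_preimage[OF x(2) r]
          ann_right_ideal] x r
    by simp
  then show "smult M r x \<in> {x \<in> carrier M. essential_right_ideal R (ann x)}" using x r by simp
qed auto

interpretation RR: right_mod R "RR R" by (intro right_modI RR_right_module R.ring_axioms)

lemma ann_RR: "RR.ann a = {r \<in> carrier R. a \<otimes>\<^bsub>R\<^esub> r = \<zero>\<^bsub>R\<^esub>}"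
  by (simp add: RR.ann_def)

lemma ann_RR_not_essential:
  assumes "right_nonsingular R" "a \<in> carrier R" "a \<noteq> \<zero>\<^bsub>R\<^esub>"
  shows "\<not> essential_right_ideal R (RR.ann a)"
  using assms RR.singular_sub_eq unfolding right_nonsingular_def nonsingular_def by auto

lemma form_vanishes_on_singular_sub:
  assumes ns: "right_nonsingular R" and f: "module_hom R M (RR R) f" and x: "x \<in> singular_sub R M"
  shows "f x = \<zero>\<^bsub>R\<^esub>"
proof (rule ccontr)
  assume nz: "f x \<noteq> \<zero>\<^bsub>R\<^esub>"
  interpret f: right_mod_hom R M "RR R" f by (intro right_mod_homI right_module RR_right_module R.ring_axioms f)
  have x': "x \<in> carrier M" "essential_right_ideal R (ann x)" using x singular_sub_eq by auto
  have fx: "f x \<in> carrier R" using f.hom_closed[OF x'(1)] by simp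
  have "ann x \<subseteq> RR.ann (f x)"
  proof
    fix r assume r: "r \<in> ann x"
    then have r': "r \<in> carrier R" "smult M r x = \<zero>\<^bsub>M\<^esub>" by (auto simp: ann_def)
    have "f x \<otimes>\<^bsub>R\<^esub> r = f (smult M r x)" by (simp only: f.hom_smult[OF x'(1) r'(1)] RR_simps)
    also have "\<dots> = \<zero>\<^bsub>R\<^esub>" using r'(2) by simp
    finally show "r \<in> RR.ann (f x)" using r by (simp add: ann_RR ann_def)
  qed
  then have "essential_right_ideal R (RR.ann (f x))"
    by (rule RI.essential_right_ideal_superset[OF x'(2) RR.ann_right_ideal, rotated]) (simp add: fx)
  then show False using ann_RR_not_essential[OF ns fx nz] by simp
qed

text \<open>Over a right nonsingular ring, M / Z(M) is nonsingular. If the multiples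
  by an essential right ideal of y are singular, then for each nonzero right ideal L one finds
  a \<in> I \<inter> L and, since ann a is not essential, t with a t \<noteq> 0 and a t y = 0.\<close>

lemma singular_sub_if_essential_multiples:
  assumes ns: "right_nonsingular R" and y: "y \<in> carrier M" and I: "essential_right_ideal R I"
    and multiples: "\<forall>r\<in>I. smult M r y \<in> singular_sub R M"
  shows "y \<in> singular_sub R M"
proof -
  have "essential_right_ideal R (ann y)"
    unfolding essential_right_ideal_def
  proof (intro conjI allI impI)
    show "right_ideal R (ann y)" by (rule ann_right_ideal[OF y])
    fix L assume L: "right_ideal R L \<and> L \<noteq> {\<zero>\<^bsub>R\<^esub>}"
    note Lf = RI.right_idealD[OF conjunct1[OF L]]
    obtain a where a: "a \<in> I" "a \<in> L" "a \<noteq> \<zero>\<^bsub>R\<^esub>"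
      using RI.essential_right_idealD[OF I conjunct1[OF L] conjunct2[OF L]] .
    have ac: "a \<in> carrier R" using a(2) Lf(1) by auto
    have ay: "essential_right_ideal R (ann (smult M a y))"
      using multiples a(1) singular_sub_eq by simp
    obtain J where J: "right_ideal R J" "J \<noteq> {\<zero>\<^bsub>R\<^esub>}" "RR.ann a \<inter> J = {\<zero>\<^bsub>R\<^esub>}"
      using ann_RR_not_essential[OF ns ac a(3)] RR.ann_right_ideal[of a] ac
      unfolding essential_right_ideal_def by auto
    obtain t where t: "t \<in> ann (smult M a y)" "t \<in> J" "t \<noteq> \<zero>\<^bsub>R\<^esub>"
      using RI.essential_right_idealD[OF ay J(1,2)] .
    have tc: "t \<in> carrier R" using t(2) RI.right_idealD(1)[OF J(1)] by auto
    have "a \<otimes>\<^bsub>R\<^esub> t \<noteq> \<zero>\<^bsub>R\<^esub>"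
    proof
      assume "a \<otimes>\<^bsub>R\<^esub> t = \<zero>\<^bsub>R\<^esub>"
      then have "t \<in> RR.ann a \<inter> J" using t tc by (simp add: ann_RR)
      then show False using J(3) t(3) by auto
    qed
    moreover have "a \<otimes>\<^bsub>R\<^esub> t \<in> ann y" using t(1) tc ac y by (simp add: ann_def smult_mult)
    moreover have "a \<otimes>\<^bsub>R\<^esub> t \<in> L" using Lf(5)[OF a(2) tc] .
    ultimately show "ann y \<inter> L \<noteq> {\<zero>\<^bsub>R\<^esub>}" by blast
  qed
  then show ?thesis using y singular_sub_eq by simp
qed

lemma torsT_eq_singular_sub:
  assumes ns: "right_nonsingular R" shows "torsT R M = singular_sub R M"
proof -
  let ?Z = "singular_sub R M"
  interpret Z: right_mod_quot R M ?Z by (intro right_mod_quotI right_module singular_sub_submodule)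
  have ann_coset: "Z.Q.ann (?Z +>\<^bsub>M\<^esub> x) = {r \<in> carrier R. smult M r x \<in> ?Z}" if x: "x \<in> carrier M" for x
  proof -
    have "smult Z.Q r (?Z +>\<^bsub>M\<^esub> x) = \<zero>\<^bsub>Z.Q\<^esub> \<longleftrightarrow> smult M r x \<in> ?Z" if r: "r \<in> carrier R" for r
      by (simp only: Z.quot_smult[OF x r] Z.coset_eq_K_iff[OF smult_closed[OF r x]] Z.quot_zero Z.coset_zero)
    then show ?thesis by (auto simp: Z.Q.ann_def)
  qed
  have "x \<in> torsT R M \<longleftrightarrow> x \<in> ?Z" if x: "x \<in> carrier M" for x
  proof -
    have "x \<in> torsT R M \<longleftrightarrow> essential_right_ideal R {r \<in> carrier R. smult M r x \<in> ?Z}"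
      using x ann_coset[OF x] by (simp add: torsT_def Z.Q.singular_sub_eq)
    also have "\<dots> \<longleftrightarrow> x \<in> ?Z"
    proof
      assume "essential_right_ideal R {r \<in> carrier R. smult M r x \<in> ?Z}"
      then show "x \<in> ?Z" by (rule singular_sub_if_essential_multiples[OF ns x]) auto
    next
      assume "x \<in> ?Z"
      then have "{r \<in> carrier R. smult M r x \<in> ?Z} = carrier R"
        using singular_sub_submodule by (auto simp: submodule_def)
      then show "essential_right_ideal R {r \<in> carrier R. smult M r x \<in> ?Z}"
        using RI.essential_right_ideal_carrier by simp
    qed
    finally show ?thesis .
  qed
  moreover have "torsT R M \<subseteq> carrier M" "?Z \<subseteq> carrier M"
    using singular_sub_submodule by (auto simp: torsT_def submodule_def)
  ultimately show ?thesis by blast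
qed

lemma singular_sub_subset_torsB:
  assumes "right_nonsingular R" "fin_gen R M" "\<forall>n\<ge>1. baer_ring (matring R n)"
  shows "singular_sub R M \<subseteq> torsB R M"
  using form_vanishes_on_singular_sub[OF assms(1)] singular_sub_submodule
  unfolding torsB_eq_form_closure[OF assms(2,3)] form_closure_zero by (auto simp: submodule_def)

end

section \<open>Strongly semihereditary rings\<close>

context right_mod_hom begin

lemma quot_preimage_singular_sub_nonsingular:
  assumes ns: "right_nonsingular R"
  shows "nonsingular R (quot_mod R M {c \<in> carrier M. h c \<in> singular_sub R N})"
proof -
  let ?L = "{c \<in> carrier M. h c \<in> singular_sub R N}"
  interpret L: right_mod_quot R M ?L
    by (intro right_mod_quotI M.right_module preimage_submodule N.singular_sub_submodule)
  have "A = ?L" if A: "A \<in> singular_sub R L.Q" for A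
  proof -
    have "A \<in> carrier L.Q" using A L.Q.singular_sub_eq by auto
    then obtain c where c: "c \<in> carrier M" "A = ?L +>\<^bsub>M\<^esub> c" by (rule L.quot_cases)
    have ess: "essential_right_ideal R (L.Q.ann A)" using A L.Q.singular_sub_eq by auto
    have "smult N r (h c) \<in> singular_sub R N" if r: "r \<in> L.Q.ann A" for r
    proof -
      have r': "r \<in> carrier R" "smult L.Q r A = \<zero>\<^bsub>L.Q\<^esub>" using r by (auto simp: L.Q.ann_def)
      have "smult L.Q r A = ?L +>\<^bsub>M\<^esub> smult M r c" unfolding c(2) by (rule L.quot_smult[OF c(1) r'(1)])
      then have "?L +>\<^bsub>M\<^esub> smult M r c = ?L"
        using r'(2) L.quot_zero L.coset_zero by metis
      then have "smult M r c \<in> ?L" using L.coset_eq_K_iff M.smult_closed[OF r'(1) c(1)] by blast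
      then show ?thesis using hom_smult[OF c(1) r'(1)] by simp
    qed
    then have "h c \<in> singular_sub R N"
      by (intro N.singular_sub_if_essential_multiples[OF ns hom_closed[OF c(1)] ess]) blast
    then show "A = ?L" unfolding c(2) using L.coset_eq_K_iff[OF c(1)] c(1) by blast
  qed
  moreover have zero: "\<zero>\<^bsub>L.Q\<^esub> = ?L" by (simp only: L.quot_zero L.coset_zero)
  moreover have "\<zero>\<^bsub>L.Q\<^esub> \<in> singular_sub R L.Q"
    using L.Q.singular_sub_submodule by (simp add: submodule_def)
  ultimately show ?thesis unfolding nonsingular_def by blast
qed

lemma hom_to_quot_of_surj:
  assumes surj: "\<forall>y\<in>carrier N. \<exists>c\<in>carrier M. h c = y"
    and L: "submodule R M L" and ker: "\<forall>c\<in>carrier M. h c = \<zero>\<^bsub>N\<^esub> \<longrightarrow> c \<in> L"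
  defines "\<psi> \<equiv> \<lambda>y. L +>\<^bsub>M\<^esub> (SOME c. c \<in> carrier M \<and> h c = y)"
  shows "module_hom R N (quot_mod R M L) \<psi>" and "\<And>c. c \<in> carrier M \<Longrightarrow> \<psi> (h c) = L +>\<^bsub>M\<^esub> c"
proof -
  interpret L: right_mod_quot R M L by (intro right_mod_quotI M.right_module L)
  define rep where "rep y = (SOME c. c \<in> carrier M \<and> h c = y)" for y
  have rep: "rep y \<in> carrier M" "h (rep y) = y" if "y \<in> carrier N" for y
    using someI_ex[OF bspec[OF surj that, unfolded Bex_def]] by (auto simp: rep_def)
  show \<psi>_h: "\<psi> (h c) = L +>\<^bsub>M\<^esub> c" if c: "c \<in> carrier M" for c
  proof -
    have "h (rep (h c) \<ominus>\<^bsub>M\<^esub> c) = \<zero>\<^bsub>N\<^esub>"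
      using hom_minus[OF rep(1) c] rep[OF hom_closed[OF c]] c by (simp add: N.M.r_neg N.M.minus_eq)
    then have "rep (h c) \<ominus>\<^bsub>M\<^esub> c \<in> L" using ker rep(1)[OF hom_closed[OF c]] c by blast
    then show ?thesis using L.coset_eq_iff rep(1)[OF hom_closed[OF c]] c by (simp add: \<psi>_def rep_def)
  qed
  have \<psi>_rep: "\<psi> y = L +>\<^bsub>M\<^esub> rep y" for y by (simp add: \<psi>_def rep_def)
  show "module_hom R N L.Q \<psi>"
    unfolding module_hom_def
  proof (intro conjI ballI)
    fix y z assume y: "y \<in> carrier N" and z: "z \<in> carrier N"
    have "\<psi> (y \<oplus>\<^bsub>N\<^esub> z) = \<psi> (h (rep y \<oplus>\<^bsub>M\<^esub> rep z))" using hom_add rep y z by simp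
    also have "\<dots> = \<psi> y \<oplus>\<^bsub>L.Q\<^esub> \<psi> z" using \<psi>_h rep y z by (simp add: \<psi>_rep L.quot_add)
    finally show "\<psi> (y \<oplus>\<^bsub>N\<^esub> z) = \<psi> y \<oplus>\<^bsub>L.Q\<^esub> \<psi> z" .
  next
    fix y r assume y: "y \<in> carrier N" and r: "r \<in> carrier R"
    have "\<psi> (smult N r y) = \<psi> (h (smult M r (rep y)))" using hom_smult rep y r by simp
    also have "\<dots> = smult L.Q r (\<psi> y)" using \<psi>_h rep y r by (simp add: \<psi>_rep L.quot_smult)
    finally show "\<psi> (smult N r y) = smult L.Q r (\<psi> y)" .
  qed (simp add: \<psi>_rep rep)
qed

end

context right_mod begin

text \<open>Strong semihereditarity only speaks about modules whose elements are sets of functions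
  nat \<Rightarrow> 'a, so M / Z(M) is realised as R^n / L with L the preimage of Z(M) under a presentation
  R^n \<rightarrow> M. Being finitely generated and nonsingular, it is projective, hence separated by forms,
  and forms on it pull back to forms on M, which vanish on the bounded part.\<close>

lemma torsB_subset_singular_sub:
  assumes ss: "right_strongly_semihereditary R" and fg: "fin_gen R M"
    and baer: "\<forall>n\<ge>1. baer_ring (matring R n)"
  shows "torsB R M \<subseteq> singular_sub R M"
proof
  have ns: "right_nonsingular R" using ss by (simp add: right_strongly_semihereditary_def)
  obtain n s where gen: "generates R M n s" by (rule generates_if_fin_gen[OF fg])
  let ?V = "free_mod R {..<n}" and ?h = "\<lambda>c. lincomb M c s n"
  interpret h: right_mod_hom R ?V M ?h
    using gen by (intro right_mod_homI free_mod_right_module R.ring_axioms right_module lincomb_free_mod_hom)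
       (simp add: generates_def)
  let ?L = "{c \<in> carrier ?V. ?h c \<in> singular_sub R M}"
  interpret W: right_mod_quot R ?V ?L
    by (intro right_mod_quotI h.M.right_module h.preimage_submodule singular_sub_submodule)
  have "projective R W.Q"
    using ss W.quot_right_module h.quot_preimage_singular_sub_nonsingular[OF ns]
      W.quot_fin_gen[OF h.M.fin_gen_if_generates[OF free_mod_generates[OF R.ring_axioms]]]
    unfolding right_strongly_semihereditary_def by blast
  have surj: "\<forall>y\<in>carrier M. \<exists>c\<in>carrier ?V. ?h c = y" using lincomb_free_mod_surj[OF gen] by blast
  have ker: "\<forall>c\<in>carrier ?V. ?h c = \<zero>\<^bsub>M\<^esub> \<longrightarrow> c \<in> ?L"
    using singular_sub_submodule by (simp add: submodule_def)
  let ?\<psi> = "\<lambda>y. ?L +>\<^bsub>?V\<^esub> (SOME c. c \<in> carrier ?V \<and> ?h c = y)"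
  note \<psi> = h.hom_to_quot_of_surj[OF surj W.submodule ker]
  fix x assume x: "x \<in> torsB R M"
  then have x_forms: "x \<in> carrier M" "\<And>f. module_hom R M (RR R) f \<Longrightarrow> f x = \<zero>\<^bsub>R\<^esub>"
    unfolding torsB_eq_form_closure[OF fg baer] form_closure_zero by auto
  obtain c where c: "c \<in> carrier ?V" "?h c = x" using surj x_forms(1) by blast
  have "?L +>\<^bsub>?V\<^esub> c = \<zero>\<^bsub>W.Q\<^esub>"
  proof (rule W.Q.projective_forms_separate_points[OF \<open>projective R W.Q\<close>])
    show "?L +>\<^bsub>?V\<^esub> c \<in> carrier W.Q" using c(1) by simp
    fix f assume "module_hom R W.Q (RR R) f"
    then have "(f \<circ> ?\<psi>) x = \<zero>\<^bsub>R\<^esub>" by (rule x_forms(2)[OF module_hom_comp[OF \<psi>(1)]])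
    then show "f (?L +>\<^bsub>?V\<^esub> c) = \<zero>\<^bsub>R\<^esub>" using \<psi>(2)[OF c(1)] c(2) by simp
  qed
  then have "c \<in> ?L" using W.coset_eq_K_iff[OF c(1)] W.quot_zero W.coset_zero by metis
  then show "x \<in> singular_sub R M" using c(2) by simp
qed

lemma torsB_eq_singular_sub:
  assumes "right_strongly_semihereditary R" "fin_gen R M" "\<forall>n\<ge>1. baer_ring (matring R n)"
  shows "torsB R M = singular_sub R M"
  using torsB_subset_singular_sub[OF assms] singular_sub_subset_torsB[OF _ assms(2,3)] assms(1)
  by (auto simp: right_strongly_semihereditary_def)

lemma torsB_eq_torsT:
  assumes "right_strongly_semihereditary R" "fin_gen R M" "\<forall>n\<ge>1. baer_ring (matring R n)"
  shows "torsB R M = torsT R M"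
  using torsB_eq_singular_sub[OF assms] torsT_eq_singular_sub assms(1)
  by (simp add: right_strongly_semihereditary_def)

lemma projective_singular_decomposition:
  assumes ss: "right_strongly_semihereditary R" and fg: "fin_gen R M"
    and baer: "\<forall>n\<ge>1. baer_ring (matring R n)"
  shows "\<exists>P Q. submodule R M P \<and> submodule R M Q \<and> P \<inter> Q = {\<zero>\<^bsub>M\<^esub>} \<and>
           (\<forall>x\<in>carrier M. \<exists>p\<in>P. \<exists>q\<in>Q. x = p \<oplus>\<^bsub>M\<^esub> q) \<and>
           fin_gen R (M\<lparr>carrier := P\<rparr>) \<and> projective R (M\<lparr>carrier := P\<rparr>) \<and>
           singular R (M\<lparr>carrier := Q\<rparr>)"
proof -
  obtain n t g where "form_splitting R M (form_closure R M {\<zero>\<^bsub>M\<^esub>}) n t g"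
    by (rule form_splitting_exists[OF fg submodule_zero baer])
  then interpret form_splitting R M "form_closure R M {\<zero>\<^bsub>M\<^esub>}" n t g .
  have C_eq: "form_closure R M {\<zero>\<^bsub>M\<^esub>} = singular_sub R M"
    using torsB_eq_form_closure[OF fg baer] torsB_eq_singular_sub[OF ss fg baer] by simp
  have "singular R (M\<lparr>carrier := singular_sub R M\<rparr>)"
    unfolding singular_def singular_sub_def using singular_sub_eq by (auto simp: ann_def)
  moreover have "\<exists>p\<in>complement. \<exists>q\<in>singular_sub R M. x = p \<oplus>\<^bsub>M\<^esub> q" if x: "x \<in> carrier M" for x
  proof -
    have "x = proj x \<oplus>\<^bsub>M\<^esub> (x \<ominus>\<^bsub>M\<^esub> proj x)"
      using C_plus_complement[OF x] proj_closed[OF x] minus_proj_in_C[OF x] C_subset M.a_comm by auto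
    moreover have "proj x \<in> complement" using x by (simp add: complement_def)
    ultimately show ?thesis using minus_proj_in_C[OF x] C_eq by auto
  qed
  ultimately show ?thesis
    using complement_submodule singular_sub_submodule C_inter_complement complement_fin_gen_projective C_eq
    by (intro exI[of _ complement] exI[of _ "singular_sub R M"]) auto
qed

end

context right_mod_quot begin

lemma clT_eq_clB:
  assumes "right_strongly_semihereditary R" "fin_gen R M" "\<forall>n\<ge>1. baer_ring (matring R n)"
  shows "clT R M K = clB R M K"
  unfolding clT_def clB_def Q.torsB_eq_torsT[OF assms(1) quot_fin_gen[OF assms(2)] assms(3)] ..

end

theorem mainTheorem4:
  fixes R :: "'a ring" and M :: "('a, 'm) module" and K :: "'m set"
  assumes "ring R"
    and "right_semihereditary R"
    and "\<forall>n\<ge>1. baer_ring (matring R n)"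
    and "right_module R M" and "fin_gen R M" and "submodule R M K"
  shows "(fin_gen R (quot_mod R M (clB R M K)) \<and> projective R (quot_mod R M (clB R M K)) \<and>
          direct_summand R M (clB R M K) \<and>
          direct_summand R M (torsB R M) \<and>
          fin_gen R (quot_mod R M (torsB R M)) \<and> projective R (quot_mod R M (torsB R M)))
       \<and> (right_strongly_semihereditary R \<longrightarrow>
          clT R M K = clB R M K \<and> direct_summand R M (clT R M K) \<and>
          (\<forall>N :: ('a, 'm) module. right_module R N \<and> fin_gen R N \<longrightarrow> torsB R N = torsT R N) \<and>
          (\<forall>N :: ('a, 'm) module. right_module R N \<and> fin_gen R N \<longrightarrow>
             (\<exists>P Q. submodule R N P \<and> submodule R N Q \<and> P \<inter> Q = {\<zero>\<^bsub>N\<^esub>} \<and>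
                (\<forall>x\<in>carrier N. \<exists>p\<in>P. \<exists>q\<in>Q. x = p \<oplus>\<^bsub>N\<^esub> q) \<and>
                fin_gen R (N\<lparr>carrier := P\<rparr>) \<and> projective R (N\<lparr>carrier := P\<rparr>) \<and>
                singular R (N\<lparr>carrier := Q\<rparr>))))"
proof -
  note baer = assms(3) and fg = assms(5)
  interpret right_mod_quot R M K by (intro right_mod_quotI assms(4,6))
  have part1: "fin_gen R (quot_mod R M (clB R M K)) \<and> projective R (quot_mod R M (clB R M K)) \<and>
      direct_summand R M (clB R M K) \<and> direct_summand R M (torsB R M) \<and>
      fin_gen R (quot_mod R M (torsB R M)) \<and> projective R (quot_mod R M (torsB R M))"
    using form_closure_summand_quotient_projective[OF fg submodule baer]
      form_closure_summand_quotient_projective[OF fg submodule_zero baer]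
    unfolding clB_eq_form_closure[OF fg baer] torsB_eq_form_closure[OF fg baer] by simp
  moreover have "clT R M K = clB R M K" if "right_strongly_semihereditary R"
    by (rule clT_eq_clB[OF that fg baer])
  moreover note right_mod.torsB_eq_torsT[OF right_modI] right_mod.projective_singular_decomposition[OF right_modI]
  ultimately show ?thesis using baer by auto
qed

end
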